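(* Consider the preprocessed game described in the context, and constants $\delta>0$ and $\beta>0$. Assume there is $K\ge0$ such that, for every joint policy (possibly history-dependent and randomized), every joint state $\mathbf s\in\mathbf S\setminus(\mathbf S_{\mathcal T}\cup\mathbf S_{\mathcal D})$ satisfies $\sum_{\mathbf a}x_{\mathbf s,\mathbf a}\le K$. Then the supremum over all joint policies of $$J(\pi)=v^{full}-\delta\, l^{full}-\beta\Big(\sum_{i=1}^N \bar H^i-H(\mathbf X)\Big)$$ is attained by a stationary joint policy $\pi:\mathbf S\cup\{\mathbf s_\epsilon\}\to\Delta(\mathbf A\cup\{\epsilon\})$.
   Context: Multiagent model: there are $N$ agents. Agent $i$ is modeled by a finite MDP $(\mathcal{S}^i,s_I^i,\mathcal{A}^i,\mathcal{T}^i)$. The joint game has states $\mathbf S=\prod_i\mathcal S^i$, initial state $\mathbf s_I$, actions $\mathbf A=\prod_i\mathcal A^i$, and transition kernel $\mathbf T(\mathbf s,\mathbf a,\mathbf y)=\prod_i\mathcal T^i(s^i,a^i,y^i)$. Target and dead-end sets: a target set $\mathbf S_{\mathcal T}$ and an avoid set $\mathbf S_{\mathcal A}$ are given. A path succeeds if it reaches $\mathbf S_{\mathcal T}$ at some time $M$ without visiting $\mathbf S_{\mathcal A}$ at times $<M$. Let $\mathbf S_{\mathcal D}$ be the set of joint states from which the maximum success probability over all joint policies is $0$. Preprocessing: add an absorbing end state $\mathbf s_\epsilon=(s^1_\epsilon,\dots,s^N_\epsilon)$ and an end action $\epsilon=(\epsilon^1,\dots,\epsilon^N)$. Every state in $\mathbf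 S_{\mathcal T}\cup\mathbf S_{\mathcal D}$ has $\epsilon$ as its only available action, and moves to $\mathbf s_\epsilon$ with probability $1$. Occupancy measures: for a joint policy, $x_{\mathbf s,\mathbf a}$ is the expected number of times action $\mathbf a$ is taken in state $\mathbf s$, with $x_{\mathbf s_\epsilon,\cdot}$ taken to be $0$. The local occupancy measure of agent $i$ is $x_{s^i,a^i}=\sum_{\mathbf s^{-i},\mathbf a^{-i}}x_{(s^i,\mathbf s^{-i}),(a^i,\mathbf a^{-i})}$. Quantities in the objective: - $v^{full}=\sum_{\mathbf s\notin\mathbf S_{\mathcal T}\cup\mathbf S_{\mathcal D}}\sum_{\mathbf a\in\mathbf A}\sum_{\mathbf y\in\mathbf S_{\mathcal T}}x_{\mathbf s,\mathbf a}\mathbf T(\mathbf s,\mathbf a,\mathbf y)$ is the success probability. - $l^{full}=\sum_{\mathbf s\in\mathbf S}\sum_{\mathbf a\in\mathbf A\cup\{\epsilon\}}x_{\mathbf s,\mathbf a}$. - $H(\mathbf X)$ is the Shannon entropy of the joint state-action process generated by the policy until it reaches $\mathbf s_\epsilon$. For a stationary policy it equals $$\sum_{\mathbf s,\mathbf a}x_{\mathbf s,\mathbf a}\log\frac{\sum_{\mathbf b}x_{\mathbf s,\mathbf b}}{x_{\mathbf s,\mathbf a}}+\sum_{\mathbf s,\mathbf a}x_{\mathbf s,\mathbf a}\sum_{\mathbf y}\mathbf T(\mathbf s,\mathbf a,\mathbf y)\log\frac{1}{\mathbf T(\mathbf s,\mathbf a,\mathbf y)}.$$ - $\bar H^i$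 is the entropy of the stationary process on agent $i$'s MDP that has the same local occupancy measures: $$\bar H^i=\sum_{s^i\in\mathcal S^i}\sum_{a^i\in\mathcal A^i\cup\{\epsilon^i\}}x_{s^i,a^i}\log\frac{\sum_{b^i}x_{s^i,b^i}}{x_{s^i,a^i}}+\sum_{s^i,a^i}x_{s^i,a^i}\sum_{y^i\in\mathcal S^i\cup\{s^i_\epsilon\}}\mathcal T^i(s^i,a^i,y^i)\log\frac{1}{\mathcal T^i(s^i,a^i,y^i)},$$ where $\mathcal T^i$ here is the kernel of agent $i$ extended by the preprocessing. The convention $0\log(\cdot/0)=0$ is used throughout. *)

theory Defs
  imports "HOL-Analysis.Analysis"
begin

text \<open>A history is the list of (state, action) pairs taken so far; a (behavioural)
policy maps a history and the current state to action probabilities.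
pathprob P pol x0 h x is the probability that the process started in x0 produces
the history h and is then in state x.\<close>

definition pathprob ::
  "('x \<Rightarrow> 'u \<Rightarrow> 'x \<Rightarrow> real) \<Rightarrow> (('x \<times> 'u) list \<Rightarrow> 'x \<Rightarrow> 'u \<Rightarrow> real) \<Rightarrow> 'x
    \<Rightarrow> ('x \<times> 'u) list \<Rightarrow> 'x \<Rightarrow> real" where
  "pathprob P pol x0 h x =
     (if (if h = [] then x else fst (h ! 0)) = x0 then 1 else 0) *
     (\<Prod>k<length h. pol (take k h) (fst (h ! k)) (snd (h ! k)) *
        P (fst (h ! k)) (snd (h ! k)) (if Suc k < length h then fst (h ! Suc k) else x))"

definition occ_gen ::
  "('x \<Rightarrow> 'u \<Rightarrow> 'x \<Rightarrow> real) \<Rightarrow> (('x \<times> 'u) list \<Rightarrow> 'x \<Rightarrow> 'u \<Rightarrow> real) \<Rightarrow> 'x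
    \<Rightarrow> 'x \<Rightarrow> 'u \<Rightarrow> ennreal" where
  "occ_gen P pol x0 x u =
     (\<Sum>t. ennreal (\<Sum>h\<in>{h. length h = t}. pathprob P pol x0 h x * pol h x u))"

definition jstates :: "('i \<Rightarrow> 's set) \<Rightarrow> ('i \<Rightarrow> 's) set" where
  "jstates S = {s. \<forall>i. s i \<in> S i}"

definition jactions :: "('i \<Rightarrow> 'a set) \<Rightarrow> ('i \<Rightarrow> 'a) set" where
  "jactions A = {a. \<forall>i. a i \<in> A i}"

definition jkernel :: "('i \<Rightarrow> 's \<Rightarrow> 'a \<Rightarrow> 's \<Rightarrow> real) \<Rightarrow> ('i::finite \<Rightarrow> 's) \<Rightarrow> ('i \<Rightarrow> 'a) \<Rightarrow> ('i \<Rightarrow> 's) \<Rightarrow> real" where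
  "jkernel Tr s a y = (\<Prod>i\<in>UNIV. Tr i (s i) (a i) (y i))"

definition orig_policy ::
  "('i \<Rightarrow> 's set) \<Rightarrow> ('i \<Rightarrow> 'a set) \<Rightarrow> ((('i \<Rightarrow> 's) \<times> ('i \<Rightarrow> 'a)) list \<Rightarrow> ('i \<Rightarrow> 's) \<Rightarrow> ('i \<Rightarrow> 'a) \<Rightarrow> real) \<Rightarrow> bool" where
  "orig_policy S A rho =
     ((\<forall>h s a. 0 \<le> rho h s a) \<and>
      (\<forall>h. \<forall>s\<in>jstates S. (\<Sum>a\<in>jactions A. rho h s a) = 1 \<and> (\<forall>a. a \<notin> jactions A \<longrightarrow> rho h s a = 0)))"

text \<open>Success probability from s0: sum over the first hitting time M of the target
set, with no avoid state visited at times < M.\<close>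
definition success_prob ::
  "('i::finite \<Rightarrow> 's \<Rightarrow> 'a \<Rightarrow> 's \<Rightarrow> real) \<Rightarrow> ('i \<Rightarrow> 's) set \<Rightarrow> ('i \<Rightarrow> 's) set
    \<Rightarrow> ((('i \<Rightarrow> 's) \<times> ('i \<Rightarrow> 'a)) list \<Rightarrow> ('i \<Rightarrow> 's) \<Rightarrow> ('i \<Rightarrow> 'a) \<Rightarrow> real) \<Rightarrow> ('i \<Rightarrow> 's) \<Rightarrow> ennreal" where
  "success_prob Tr ST SA rho s0 =
     (\<Sum>M. ennreal (\<Sum>h\<in>{h. length h = M}. \<Sum>y\<in>ST.
        if (\<forall>p\<in>set h. fst p \<notin> ST \<and> fst p \<notin> SA) then pathprob (jkernel Tr) rho s0 h y else 0))"

definition dead_set ::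
  "('i::finite \<Rightarrow> 's set) \<Rightarrow> ('i \<Rightarrow> 'a set) \<Rightarrow> ('i \<Rightarrow> 's \<Rightarrow> 'a \<Rightarrow> 's \<Rightarrow> real)
    \<Rightarrow> ('i \<Rightarrow> 's) set \<Rightarrow> ('i \<Rightarrow> 's) set \<Rightarrow> ('i \<Rightarrow> 's) set" where
  "dead_set S A Tr ST SA =
     {s \<in> jstates S. \<forall>rho. orig_policy S A rho \<longrightarrow> success_prob Tr ST SA rho s = 0}"

text \<open>Preprocessed joint states: Some s for s in S, None for the end state s_eps.
Preprocessed joint actions: Some a for a in A, None for the end action eps.\<close>

definition pkernel ::
  "('i::finite \<Rightarrow> 's \<Rightarrow> 'a \<Rightarrow> 's \<Rightarrow> real) \<Rightarrow> ('i \<Rightarrow> 's) set \<Rightarrow> ('i \<Rightarrow> 's) set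
    \<Rightarrow> ('i \<Rightarrow> 's) option \<Rightarrow> ('i \<Rightarrow> 'a) option \<Rightarrow> ('i \<Rightarrow> 's) option \<Rightarrow> real" where
  "pkernel Tr ST SD s a y =
     (case s of None \<Rightarrow> 0
      | Some s' \<Rightarrow>
          (if s' \<in> ST \<union> SD then (if a = None \<and> y = None then 1 else 0)
           else (case (a, y) of (Some a', Some y') \<Rightarrow> jkernel Tr s' a' y' | _ \<Rightarrow> 0)))"

definition avail :: "('i \<Rightarrow> 'a set) \<Rightarrow> ('i \<Rightarrow> 's) set \<Rightarrow> ('i \<Rightarrow> 's) set \<Rightarrow> ('i \<Rightarrow> 's) \<Rightarrow> ('i \<Rightarrow> 'a) option set" where
  "avail A ST SD s = (if s \<in> ST \<union> SD then {None} else Some ` jactions A)"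

type_synonym ('i, 's, 'a) ppolicy =
  "((('i \<Rightarrow> 's) option \<times> ('i \<Rightarrow> 'a) option) list \<Rightarrow> ('i \<Rightarrow> 's) option \<Rightarrow> ('i \<Rightarrow> 'a) option \<Rightarrow> real)"

definition pp_policy ::
  "('i::finite \<Rightarrow> 's set) \<Rightarrow> ('i \<Rightarrow> 'a set) \<Rightarrow> ('i \<Rightarrow> 's) set \<Rightarrow> ('i \<Rightarrow> 's) set
    \<Rightarrow> ('i, 's, 'a) ppolicy \<Rightarrow> bool" where
  "pp_policy S A ST SD pol =
     ((\<forall>h s a. 0 \<le> pol h s a) \<and>
      (\<forall>h. \<forall>s\<in>jstates S. (\<Sum>a\<in>avail A ST SD s. pol h (Some s) a) = 1 \<and>
                          (\<forall>a. a \<notin> avail A ST SD s \<longrightarrow> pol h (Some s) a = 0)))"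

definition pocc ::
  "('i::finite \<Rightarrow> 's set) \<Rightarrow> ('i \<Rightarrow> 'a set) \<Rightarrow> ('i \<Rightarrow> 's \<Rightarrow> 'a \<Rightarrow> 's \<Rightarrow> real) \<Rightarrow> ('i \<Rightarrow> 's)
    \<Rightarrow> ('i \<Rightarrow> 's) set \<Rightarrow> ('i \<Rightarrow> 's) set \<Rightarrow> ('i, 's, 'a) ppolicy
    \<Rightarrow> ('i \<Rightarrow> 's) \<Rightarrow> ('i \<Rightarrow> 'a) option \<Rightarrow> ennreal" where
  "pocc S A Tr sI ST SA pol s a =
     occ_gen (pkernel Tr ST (dead_set S A Tr ST SA)) pol (Some sI) (Some s) a"

definition xocc where
  "xocc S A Tr sI ST SA pol s a = enn2real (pocc S A Tr sI ST SA pol s a)"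

definition xlog :: "real \<Rightarrow> real \<Rightarrow> real" where
  "xlog a b = (if a = 0 then 0 else a * ln (b / a))"

definition v_full where
  "v_full S A Tr sI ST SA pol =
     (\<Sum>s\<in>jstates S - (ST \<union> dead_set S A Tr ST SA). \<Sum>a\<in>jactions A. \<Sum>y\<in>ST.
        xocc S A Tr sI ST SA pol s (Some a) * jkernel Tr s a y)"

definition l_full where
  "l_full S A Tr sI ST SA pol =
     (\<Sum>s\<in>jstates S. \<Sum>a\<in>insert None (Some ` jactions A). xocc S A Tr sI ST SA pol s a)"

text \<open>Shannon entropy of the joint state-action process until s_eps is reached:
entropy of the distribution of complete trajectories (histories ending in s_eps).\<close>
definition H_X where
  "H_X S A Tr sI ST SA pol =
     enn2real (\<Sum>t. ennreal (\<Sum>h\<in>{h. length h = t}.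
        xlog (pathprob (pkernel Tr ST (dead_set S A Tr ST SA)) pol (Some sI) h None) 1))"

text \<open>Local occupancy measure of agent i (None = local end action eps^i).\<close>
definition xloc where
  "xloc S A Tr sI ST SA pol i u b =
     (\<Sum>s\<in>{s\<in>jstates S. s i = u}.
        (case b of None \<Rightarrow> xocc S A Tr sI ST SA pol s None
         | Some c \<Rightarrow> (\<Sum>a\<in>{a\<in>jactions A. a i = c}. xocc S A Tr sI ST SA pol s (Some a))))"

text \<open>Extended local kernel of agent i (None = local end state / end action).\<close>
definition lkernel :: "('i \<Rightarrow> 's \<Rightarrow> 'a \<Rightarrow> 's \<Rightarrow> real) \<Rightarrow> 'i \<Rightarrow> 's \<Rightarrow> 'a option \<Rightarrow> 's option \<Rightarrow> real" where
  "lkernel Tr i u b y =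
     (case b of None \<Rightarrow> (if y = None then 1 else 0)
      | Some c \<Rightarrow> (case y of None \<Rightarrow> 0 | Some y' \<Rightarrow> Tr i u c y'))"

definition Hbar where
  "Hbar S A Tr sI ST SA pol i =
     (\<Sum>u\<in>S i. \<Sum>b\<in>insert None (Some ` A i).
        xlog (xloc S A Tr sI ST SA pol i u b)
             (\<Sum>b'\<in>insert None (Some ` A i). xloc S A Tr sI ST SA pol i u b'))
   + (\<Sum>u\<in>S i. \<Sum>b\<in>insert None (Some ` A i). xloc S A Tr sI ST SA pol i u b *
        (\<Sum>y\<in>insert None (Some ` S i). xlog (lkernel Tr i u b y) 1))"

definition J_obj where
  "J_obj S A Tr sI ST SA (\<delta>::real) (\<beta>::real) pol =
     v_full S A Tr sI ST SA pol - \<delta> * l_full S A Tr sI ST SA pol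
     - \<beta> * ((\<Sum>i\<in>UNIV. Hbar S A Tr sI ST SA pol i) - H_X S A Tr sI ST SA pol)"

end

theory Submission
  imports Defs
begin

text \<open>Every policy has an occupancy measure, and these all lie in the set of nonnegative
  flows that satisfy the conservation equations and are bounded (the hypothesis on K bounds
  the visits to non-stopping states, and each visit of a stopping state other than the start
  is preceded by one of a non-stopping state). This set is closed and bounded, hence compact. All terms of J
  except H(X) are continuous functions of the occupancy measure. Decomposing the trajectory
  entropy step by step and applying the log-sum inequality gives H(X) \<le> H(x), the entropy
  of the stationary process with the same occupancy measure x, with equality for stationary
  policies. So J is bounded by a continuous function of x that agrees with J on stationary
  policies; it attains its maximum on the compact set of flows, and every flow x is the
  occupancy measure of the stationary policy x(s,a) / \<Sigma>b x(s,b).\<close>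

lemma pathprob_Nil: "pathprob P pol x0 [] x = (if x = x0 then 1 else 0)"
  by (simp add: pathprob_def)

lemma pathprob_snoc:
  "pathprob P pol x0 (h @ [(x,u)]) y = pathprob P pol x0 h x * pol h x u * P x u y"
proof -
  have first: "(if h @ [(x,u)] = [] then y else fst ((h @ [(x,u)]) ! 0)) = (if h = [] then x else fst (h ! 0))"
    by (cases h) auto
  have prod: "(\<Prod>k<length (h @ [(x,u)]). pol (take k (h @ [(x,u)])) (fst ((h @ [(x,u)]) ! k)) (snd ((h @ [(x,u)]) ! k)) *
        P (fst ((h @ [(x,u)]) ! k)) (snd ((h @ [(x,u)]) ! k)) (if Suc k < length (h @ [(x,u)]) then fst ((h @ [(x,u)]) ! Suc k) else y))
      = (\<Prod>k<length h. pol (take k h) (fst (h ! k)) (snd (h ! k)) *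
        P (fst (h ! k)) (snd (h ! k)) (if Suc k < length h then fst (h ! Suc k) else x)) * (pol h x u * P x u y)"
    unfolding length_append_singleton prod.lessThan_Suc
    by (intro arg_cong2[where f="(*)"] prod.cong) (auto simp: nth_append)
  show ?thesis unfolding pathprob_def first prod by (simp add: ac_simps)
qed

lemma finite_lists_length: "finite {h :: ('a::finite) list. length h = t}"
  using finite_lists_length_eq[of "UNIV :: 'a set" t] by simp

lemma card_lists_length: "card {h :: ('a::finite) list. length h = t} = CARD('a) ^ t"
  using card_lists_length_eq[of "UNIV :: 'a set" t] by simp

lemma sum_lists_length_Suc:
  fixes f :: "('a::finite) list \<Rightarrow> 'b::comm_monoid_add"
  shows "(\<Sum>h\<in>{h. length h = Suc t}. f h) = (\<Sum>h\<in>{h. length h = t}. \<Sum>p\<in>UNIV. f (h @ [p]))"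
proof -
  have bij: "bij_betw (\<lambda>(h,p). h @ [p]) ({h. length h = t} \<times> UNIV) {h. length h = Suc t}"
  proof (rule bij_betwI[where g="\<lambda>h. (butlast h, last h)"])
    show "(\<lambda>(h, p). h @ [p]) \<in> {h. length h = t} \<times> UNIV \<rightarrow> {h. length h = Suc t}" by auto
    show "(\<lambda>h. (butlast h, last h)) \<in> {h. length h = Suc t} \<rightarrow> {h. length h = t} \<times> UNIV" by auto
    show "\<And>x. x \<in> {h. length h = t} \<times> UNIV \<Longrightarrow> (butlast (case x of (h, p) \<Rightarrow> h @ [p]), last (case x of (h, p) \<Rightarrow> h @ [p])) = x"
      by auto
    show "\<And>y. y \<in> {h. length h = Suc t} \<Longrightarrow> (case (butlast y, last y) of (h, p) \<Rightarrow> h @ [p]) = y"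
      by (metis (mono_tags, lifting) append_butlast_last_id case_prod_conv length_0_conv mem_Collect_eq nat.distinct(1))
  qed
  have "(\<Sum>h\<in>{h. length h = Suc t}. f h) = (\<Sum>x\<in>{h. length h = t} \<times> UNIV. f ((\<lambda>(h,p). h @ [p]) x))"
    using sum.reindex_bij_betw[OF bij, of f] by simp
  also have "\<dots> = (\<Sum>h\<in>{h. length h = t}. \<Sum>p\<in>UNIV. f (h @ [p]))"
    unfolding sum.cartesian_product by (simp add: split_def)
  finally show ?thesis .
qed

lemma sum_UNIV_prod: "(\<Sum>p\<in>(UNIV::('a::finite\<times>'b::finite) set). f p) = (\<Sum>x\<in>UNIV. \<Sum>u\<in>UNIV. f (x,u))"
  by (subst sum.cartesian_product) simp

definition visit_prob where "visit_prob P pol x0 t x = (\<Sum>h\<in>{h. length h = t}. pathprob P pol x0 h x)"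
definition act_prob where "act_prob P pol x0 t x u = (\<Sum>h\<in>{h. length h = t}. pathprob P pol x0 h x * pol h x u)"

lemma occ_gen_act_prob: "occ_gen P pol x0 x u = (\<Sum>t. ennreal (act_prob P pol x0 t x u))"
  by (simp add: occ_gen_def act_prob_def)

lemma visit_prob_0: "visit_prob P pol x0 0 x = (if x = x0 then 1 else 0)"
  by (simp add: visit_prob_def pathprob_Nil)

lemma visit_prob_Suc:
  fixes P :: "'x::finite \<Rightarrow> 'u::finite \<Rightarrow> 'x \<Rightarrow> real"
  shows "visit_prob P pol x0 (Suc t) y = (\<Sum>x\<in>UNIV. \<Sum>u\<in>UNIV. act_prob P pol x0 t x u * P x u y)"
proof -
  have "visit_prob P pol x0 (Suc t) y = (\<Sum>h\<in>{h. length h = t}. \<Sum>p\<in>UNIV. pathprob P pol x0 (h @ [p]) y)"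
    unfolding visit_prob_def by (rule sum_lists_length_Suc)
  also have "\<dots> = (\<Sum>h\<in>{h. length h = t}. \<Sum>x\<in>UNIV. \<Sum>u\<in>UNIV. pathprob P pol x0 h x * pol h x u * P x u y)"
    by (rule sum.cong[OF refl]) (simp add: pathprob_snoc sum_UNIV_prod)
  also have "\<dots> = (\<Sum>x\<in>UNIV. \<Sum>u\<in>UNIV. act_prob P pol x0 t x u * P x u y)"
  proof -
    have "\<And>f :: _ \<Rightarrow> _ \<Rightarrow> _ \<Rightarrow> real. (\<Sum>h\<in>{h. length h = t}. \<Sum>x\<in>(UNIV::'x set). \<Sum>u\<in>(UNIV::'u set). f h x u)
        = (\<Sum>x\<in>UNIV. \<Sum>u\<in>UNIV. \<Sum>h\<in>{h. length h = t}. f h x u)"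
      by (subst sum.swap, rule sum.cong[OF refl], rule sum.swap)
    then show ?thesis by (simp add: act_prob_def sum_distrib_right)
  qed
  finally show ?thesis .
qed

lemma pathprob_nonneg:
  assumes "\<forall>h x u. 0 \<le> pol h x u" "\<forall>x u y. 0 \<le> P x u y"
  shows "0 \<le> pathprob P pol x0 h x"
  using assms unfolding pathprob_def by (auto intro!: mult_nonneg_nonneg prod_nonneg)

lemma sum_UNIV_option:
  "(\<Sum>x\<in>(UNIV::'a::finite option set). f x) = f None + (\<Sum>x\<in>UNIV. f (Some x))"
proof -
  have "(\<Sum>x\<in>(UNIV::'a option set). f x) = (\<Sum>x\<in>insert None (range Some). f x)"
    by (simp add: UNIV_option_conv)
  also have "\<dots> = f None + (\<Sum>x\<in>range Some. f x)"
    by (subst sum.insert) auto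
  also have "(\<Sum>x\<in>range Some. f x) = (\<Sum>x\<in>UNIV. f (Some x))"
    by (subst sum.reindex) (auto simp: inj_on_def)
  finally show ?thesis .
qed

lemma jkernel_sum_UNIV:
  fixes Tr :: "'i::finite \<Rightarrow> 's::finite \<Rightarrow> 'a \<Rightarrow> 's \<Rightarrow> real"
  shows "(\<Sum>y\<in>UNIV. jkernel Tr s a y) = (\<Prod>i\<in>UNIV. \<Sum>v\<in>UNIV. Tr i (s i) (a i) v)"
  unfolding jkernel_def
  by (subst prod_sum_PiE) auto

lemma invariant_measure_vanishes_on_leaks:
  fixes D :: "'a \<Rightarrow> real"
  assumes "finite I" and nonneg: "\<And>y. y \<in> I \<Longrightarrow> 0 \<le> D y"
    and invariant: "\<And>y. y \<in> I \<Longrightarrow> D y = (\<Sum>s\<in>I. D s * Q s y)"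
    and mass: "\<And>s. s \<in> I \<Longrightarrow> (\<Sum>y\<in>I. Q s y) = (if s \<in> L then 0 else 1)"
    and s: "s \<in> I" "s \<in> L"
  shows "D s = 0"
proof -
  have "(\<Sum>y\<in>I. D y) = (\<Sum>y\<in>I. \<Sum>s\<in>I. D s * Q s y)"
    by (rule sum.cong[OF refl invariant])
  also have "\<dots> = (\<Sum>s\<in>I. D s * (\<Sum>y\<in>I. Q s y))"
    by (subst sum.swap) (simp add: sum_distrib_left)
  also have "\<dots> = (\<Sum>s\<in>I. if s \<in> L then 0 else D s)"
    using mass by (intro sum.cong) auto
  moreover have "(\<Sum>y\<in>I. D y) = (\<Sum>y\<in>I. if y \<in> L then D y else 0) + (\<Sum>y\<in>I. if y \<in> L then 0 else D y)"
    by (subst sum.distrib[symmetric]) (rule sum.cong, auto)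
  ultimately have "(\<Sum>y\<in>I. if y \<in> L then D y else 0) = 0" by simp
  then show ?thesis
    using sum_nonneg_eq_0_iff[of I "\<lambda>y. if y \<in> L then D y else 0"] \<open>finite I\<close> nonneg s by auto
qed

lemma xlog_zero[simp]: "xlog 0 b = 0" by (simp add: xlog_def)

lemma xlog_nonneg: "0 \<le> a \<Longrightarrow> a \<le> b \<Longrightarrow> 0 \<le> xlog a b"
  by (auto simp: xlog_def intro!: mult_nonneg_nonneg ln_ge_zero)

lemma xlog_le_right: assumes "0 \<le> a" "a \<le> b" shows "xlog a b \<le> b"
proof (cases "a = 0")
  case True then show ?thesis using assms by simp
next
  case False
  then have a: "0 < a" using assms by simp
  have "ln (b / a) \<le> b / a - 1" using a assms by (intro ln_le_minus_one) auto
  then have "a * ln (b / a) \<le> a * (b / a - 1)" using a by (intro mult_left_mono) auto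
  also have "\<dots> = b - a" using a by (simp add: field_simps)
  finally show ?thesis using False assms by (simp add: xlog_def)
qed

lemma xlog_mult3_one:
  assumes "0 \<le> a" "0 \<le> b" "0 \<le> c"
  shows "xlog (a*b*c) 1 = b*c*xlog a 1 + a*c*xlog b 1 + a*b*xlog c 1"
proof (cases "a = 0 \<or> b = 0 \<or> c = 0")
  case True then show ?thesis by (auto simp: xlog_def)
next
  case False
  then have p: "0 < a" "0 < b" "0 < c" using assms by auto
  then show ?thesis
    by (simp add: xlog_def ln_div ln_mult algebra_simps)
qed

lemma xlog_scale:
  assumes "0 \<le> a" "0 \<le> b"
  shows "xlog (a*b) a = a * xlog b 1"
proof (cases "a = 0 \<or> b = 0")
  case True then show ?thesis by (auto simp: xlog_def)
next
  case False
  then have p: "0 < a" "0 < b" using assms by auto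
  then show ?thesis by (simp add: xlog_def ln_div ln_mult algebra_simps)
qed

lemma xlog_eq_ln_add:
  assumes "0 \<le> a" "0 < c"
  shows "xlog a c = a * ln c + xlog a 1"
proof (cases "a = 0")
  case True then show ?thesis by simp
next
  case False
  then have p: "0 < a" using assms by auto
  then show ?thesis using assms by (simp add: xlog_def ln_div algebra_simps)
qed

lemma xlog_mono_right:
  assumes "0 \<le> a" "a > 0 \<Longrightarrow> 0 < b" "b \<le> b'"
  shows "xlog a b \<le> xlog a b'"
proof (cases "a = 0")
  case True then show ?thesis by simp
next
  case False
  then have p: "0 < a" "0 < b" using assms by auto
  then have "ln (b / a) \<le> ln (b' / a)" using assms by (simp add: divide_right_mono)
  then show ?thesis using p False by (simp add: xlog_def)
qed

lemma xlog_add_le: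
  assumes "0 \<le> a1" "0 \<le> a2" "0 \<le> b1" "0 \<le> b2" "a1 > 0 \<Longrightarrow> b1 > 0" "a2 > 0 \<Longrightarrow> b2 > 0"
  shows "xlog a1 b1 + xlog a2 b2 \<le> xlog (a1 + a2) (b1 + b2)"
proof (cases "a1 = 0")
  case True
  then show ?thesis using assms by (auto intro!: xlog_mono_right)
next
  case F1: False
  show ?thesis
  proof (cases "a2 = 0")
    case True
    then show ?thesis using assms by (auto intro!: xlog_mono_right)
  next
    case F2: False
    have p: "0 < a1" "0 < a2" "0 < b1" "0 < b2" using assms F1 F2 by auto
    define AA where "AA = a1 + a2"
    define BB where "BB = b1 + b2"
    have pAB: "0 < AA" "0 < BB" using p by (auto simp: AA_def BB_def)
    have key: "a * ln (b / a) \<le> a * ln (BB / AA) + b * AA / BB - a" if "0 < a" "0 < b" for a b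
    proof -
      have "ln (b * AA / (a * BB)) \<le> b * AA / (a * BB) - 1"
        using that pAB by (intro ln_le_minus_one) auto
      moreover have "ln (b * AA / (a * BB)) = ln (b / a) - ln (BB / AA)"
        using that pAB by (simp add: ln_div ln_mult)
      ultimately have "ln (b / a) \<le> ln (BB / AA) + b * AA / (a * BB) - 1" by simp
      then have "a * ln (b / a) \<le> a * (ln (BB / AA) + b * AA / (a * BB) - 1)"
        using that by (intro mult_left_mono) auto
      also have "\<dots> = a * ln (BB / AA) + b * AA / BB - a" using that pAB by (simp add: field_simps)
      finally show ?thesis .
    qed
    have "xlog a1 b1 + xlog a2 b2 = a1 * ln (b1 / a1) + a2 * ln (b2 / a2)"
      using p by (simp add: xlog_def)
    also have "\<dots> \<le> (a1 * ln (BB / AA) + b1 * AA / BB - a1) + (a2 * ln (BB / AA) + b2 * AA / BB - a2)"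
      using key[OF p(1) p(3)] key[OF p(2) p(4)] by simp
    also have "\<dots> = AA * ln (BB / AA)"
    proof -
      have e: "b1 * AA / BB + b2 * AA / BB = AA"
      proof -
        have "b1 * AA / BB + b2 * AA / BB = (b1 + b2) * AA / BB" by (simp add: add_divide_distrib distrib_right)
        then show ?thesis using pAB by (simp add: BB_def)
      qed
      have "a1 * ln (BB / AA) + a2 * ln (BB / AA) = AA * ln (BB / AA)" by (simp add: AA_def distrib_right)
      then show ?thesis using e by (simp add: AA_def)
    qed
    also have "\<dots> = xlog (a1 + a2) (b1 + b2)" using pAB by (simp add: xlog_def AA_def BB_def)
    finally show ?thesis .
  qed
qed

lemma xlog_sum_le:
  assumes "finite I" "\<And>i. i \<in> I \<Longrightarrow> 0 \<le> a i" "\<And>i. i \<in> I \<Longrightarrow> 0 \<le> b i"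
    "\<And>i. i \<in> I \<Longrightarrow> a i > 0 \<Longrightarrow> b i > 0"
  shows "(\<Sum>i\<in>I. xlog (a i) (b i)) \<le> xlog (\<Sum>i\<in>I. a i) (\<Sum>i\<in>I. b i)"
  using assms
proof (induction I rule: finite_induct)
  case empty then show ?case by simp
next
  case (insert j I)
  have "(\<Sum>i\<in>insert j I. xlog (a i) (b i)) = xlog (a j) (b j) + (\<Sum>i\<in>I. xlog (a i) (b i))"
    using insert by simp
  also have "\<dots> \<le> xlog (a j) (b j) + xlog (\<Sum>i\<in>I. a i) (\<Sum>i\<in>I. b i)"
    using insert by simp
  also have "\<dots> \<le> xlog (a j + (\<Sum>i\<in>I. a i)) (b j + (\<Sum>i\<in>I. b i))"
  proof (rule xlog_add_le)
    show "0 \<le> (\<Sum>i\<in>I. a i)" "0 \<le> (\<Sum>i\<in>I. b i)" using insert by (auto intro: sum_nonneg)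
    show "0 \<le> a j" "0 \<le> b j" using insert by auto
    show "a j > 0 \<Longrightarrow> b j > 0" using insert by auto
    assume pos: "(\<Sum>i\<in>I. a i) > 0"
    have "\<exists>i\<in>I. a i \<noteq> 0"
    proof (rule ccontr)
      assume "\<not> (\<exists>i\<in>I. a i \<noteq> 0)"
      then have "(\<Sum>i\<in>I. a i) = 0" by simp
      then show False using pos by simp
    qed
    then obtain i where i: "i \<in> I" "a i \<noteq> 0" by blast
    then have "a i > 0" using insert.prems(1)[of i] by auto
    then have bi: "b i > 0" using insert.prems(3)[of i] i by auto
    have "b i \<le> (\<Sum>i\<in>I. b i)"
      by (rule member_le_sum) (use insert i in auto)
    then show "(\<Sum>i\<in>I. b i) > 0" using bi by linarith
  qed
  also have "\<dots> = xlog (\<Sum>i\<in>insert j I. a i) (\<Sum>i\<in>insert j I. b i)" using insert by simp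
  finally show ?case .
qed

lemma xlog_one_le_sqrt: assumes "0 \<le> m" shows "xlog m 1 \<le> 2 * sqrt m"
proof (cases "m = 0")
  case True then show ?thesis by simp
next
  case False
  then have m: "0 < m" using assms by simp
  define r where "r = sqrt m"
  have r: "0 < r" "m = r * r" using m by (auto simp: r_def)
  have "ln (1 / r) \<le> 1 / r - 1" using r by (intro ln_le_minus_one) auto
  have "xlog m 1 = r * r * ln (1 / (r * r))" using m r by (simp add: xlog_def)
  also have "ln (1 / (r * r)) = 2 * ln (1 / r)" using r by (simp add: ln_div ln_mult)
  also have "r * r * (2 * ln (1 / r)) \<le> r * r * (2 * (1 / r - 1))"
    using \<open>ln (1 / r) \<le> 1 / r - 1\<close> r by (intro mult_left_mono) auto
  also have "\<dots> \<le> 2 * r" using r by (simp add: field_simps)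
  finally show ?thesis by (simp add: r_def)
qed

lemma decseq_summable_mult_LIMSEQ_0:
  fixes f :: "nat \<Rightarrow> real"
  assumes visit: "\<And>n. 0 \<le> f n" and dec: "\<And>n. f (Suc n) \<le> f n" and sm: "summable f"
  shows "(\<lambda>n. real n * f n) \<longlonglongrightarrow> 0"
proof -
  define r where "r k = suminf f - (\<Sum>t<k. f t)" for k
  have r0: "r \<longlonglongrightarrow> 0"
    unfolding r_def using tendsto_diff[OF tendsto_const[of "suminf f"] summable_LIMSEQ[OF sm]] by simp
  have anti: "f n \<le> f t" if "t \<le> n" for t n
    using that by (induction n) (auto simp: le_Suc_eq intro: order_trans[OF dec])
  have bnd: "real n * f n \<le> 2 * r (n div 2)" for n
  proof -
    define k where "k = n div 2"
    have kn: "k \<le> n" by (simp add: k_def)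
    have "real (n - k) * f n = (\<Sum>t\<in>{k..<n}. f n)" by simp
    also have "\<dots> \<le> (\<Sum>t\<in>{k..<n}. f t)" by (intro sum_mono anti) auto
    also have "\<dots> = (\<Sum>t<n. f t) - (\<Sum>t<k. f t)"
      using sum_diff_nat_ivl[of 0 k n f] kn by (simp add: atLeast0LessThan)
    also have "\<dots> \<le> r k" unfolding r_def using sum_le_suminf[OF sm, of "{..<n}"] visit by simp
    finally have a: "real (n - k) * f n \<le> r k" .
    have "real n \<le> 2 * real (n - k)" by (simp add: k_def)
    then have "real n * f n \<le> 2 * real (n - k) * f n" using visit by (intro mult_right_mono) auto
    also have "\<dots> \<le> 2 * r k" using a by simp
    finally show ?thesis by (simp add: k_def)
  qed
  have rdiv: "(\<lambda>n. r (n div 2)) \<longlonglongrightarrow> 0"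
  proof (rule LIMSEQ_I)
    fix e :: real assume e: "0 < e"
    obtain N where N: "\<forall>k\<ge>N. norm (r k - 0) < e" using LIMSEQ_D[OF r0 e] by blast
    have "\<forall>n\<ge>2*N. norm (r (n div 2) - 0) < e" using N by auto
    then show "\<exists>no. \<forall>n\<ge>no. norm (r (n div 2) - 0) < e" by blast
  qed
  show ?thesis
  proof (rule tendsto_sandwich[where f="\<lambda>n. 0" and h="\<lambda>n. 2 * r (n div 2)"])
    show "\<forall>\<^sub>F n in sequentially. 0 \<le> real n * f n" using visit by simp
    show "\<forall>\<^sub>F n in sequentially. real n * f n \<le> 2 * r (n div 2)" using bnd by simp
    show "(\<lambda>n. 2 * r (n div 2)) \<longlonglongrightarrow> 0" using tendsto_mult[OF tendsto_const rdiv, of 2] by simp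
  qed simp
qed

lemma continuous_on_xlog_one: "continuous_on {0..} (\<lambda>a. xlog a 1)"
  unfolding continuous_on_def
proof (intro ballI)
  fix a0 :: real assume a0: "a0 \<in> {0..}"
  show "((\<lambda>a. xlog a 1) \<longlongrightarrow> xlog a0 1) (at a0 within {0..})"
  proof (cases "a0 = 0")
    case False
    then have p: "0 < a0" using a0 by simp
    have ev: "\<forall>\<^sub>F a in at a0 within {0..}. - (a * ln a) = xlog a 1"
    proof -
      have "((\<lambda>a. a) \<longlongrightarrow> a0) (at a0 within {0..})" by (rule tendsto_ident_at)
      from order_tendstoD(1)[OF this p]
      have "\<forall>\<^sub>F a in at a0 within {0..}. a > 0" .
      then show ?thesis by eventually_elim (simp add: xlog_def ln_div)
    qed
    have "((\<lambda>a. - (a * ln a)) \<longlongrightarrow> - (a0 * ln a0)) (at a0 within {0..})"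
      by (rule tendsto_minus[OF tendsto_mult[OF tendsto_ident_at tendsto_ln[OF tendsto_ident_at]]]) (use p in simp)
    moreover have "- (a0 * ln a0) = xlog a0 1" using p by (simp add: xlog_def ln_div)
    ultimately show ?thesis using Lim_transform_eventually[OF _ ev] by simp
  next
    case True
    have "((\<lambda>a. a) \<longlongrightarrow> a0) (at a0 within {0..})" by (rule tendsto_ident_at)
    from order_tendstoD(2)[OF this, of 1]
    have ev1: "\<forall>\<^sub>F a in at a0 within {0..}. a < 1" using True by simp
    have ev2: "\<forall>\<^sub>F a in at a0 within {0..}. a \<in> {0..}" by (simp add: eventually_at_filter)
    have l: "((\<lambda>a. 2 * sqrt a) \<longlongrightarrow> 2 * sqrt a0) (at a0 within {0..})" by (intro tendsto_intros)
    show ?thesis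
    proof (rule tendsto_sandwich[where f="\<lambda>a. 0" and h="\<lambda>a. 2 * sqrt a"])
      show "\<forall>\<^sub>F n in at a0 within {0..}. 0 \<le> xlog n 1"
        using ev1 ev2 by eventually_elim (auto intro: xlog_nonneg)
      show "\<forall>\<^sub>F n in at a0 within {0..}. xlog n 1 \<le> 2 * sqrt n"
        using ev2 by eventually_elim (auto intro: xlog_one_le_sqrt)
      show "((\<lambda>n. 0) \<longlongrightarrow> xlog a0 1) (at a0 within {0..})" using True by simp
      show "((\<lambda>n. 2 * sqrt n) \<longlongrightarrow> xlog a0 1) (at a0 within {0..})" using l True by simp
    qed
  qed
qed

definition "xlog_domain = {p :: real \<times> real. 0 \<le> fst p \<and> fst p \<le> snd p}"

lemma continuous_on_xlog_pair: "continuous_on xlog_domain (\<lambda>p. xlog (fst p) (snd p))"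
  unfolding continuous_on_def
proof (intro ballI)
  fix p0 assume p0: "p0 \<in> xlog_domain"
  show "((\<lambda>p. xlog (fst p) (snd p)) \<longlongrightarrow> xlog (fst p0) (snd p0)) (at p0 within xlog_domain)"
  proof (cases "snd p0 > 0")
    case True
    have "(snd \<longlongrightarrow> snd p0) (at p0 within xlog_domain)" by (rule tendsto_snd[OF tendsto_ident_at])
    from order_tendstoD(1)[OF this True]
    have evs: "\<forall>\<^sub>F p in at p0 within xlog_domain. snd p > 0" .
    have evD: "\<forall>\<^sub>F p in at p0 within xlog_domain. p \<in> xlog_domain" by (simp add: eventually_at_filter)
    have ev: "\<forall>\<^sub>F p in at p0 within xlog_domain. fst p * ln (snd p) + xlog (fst p) 1 = xlog (fst p) (snd p)"
      using evs evD by eventually_elim (rule xlog_eq_ln_add[symmetric], auto simp: xlog_domain_def)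
    have t1: "((\<lambda>p. fst p * ln (snd p)) \<longlongrightarrow> fst p0 * ln (snd p0)) (at p0 within xlog_domain)"
      by (rule tendsto_mult[OF tendsto_fst[OF tendsto_ident_at] tendsto_ln[OF tendsto_snd[OF tendsto_ident_at]]])
         (use True in simp)
    have t2: "((\<lambda>p. xlog (fst p) 1) \<longlongrightarrow> xlog (fst p0) 1) (at p0 within xlog_domain)"
    proof (rule continuous_on_tendsto_compose[OF continuous_on_xlog_one])
      show "(fst \<longlongrightarrow> fst p0) (at p0 within xlog_domain)" by (intro tendsto_intros)
      show "fst p0 \<in> {0..}" using p0 by (simp add: xlog_domain_def)
      show "\<forall>\<^sub>F x in at p0 within xlog_domain. fst x \<in> {0..}" using evD by eventually_elim (simp add: xlog_domain_def)
    qed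
    have "((\<lambda>p. fst p * ln (snd p) + xlog (fst p) 1) \<longlongrightarrow> fst p0 * ln (snd p0) + xlog (fst p0) 1) (at p0 within xlog_domain)"
      by (rule tendsto_add[OF t1 t2])
    moreover have "fst p0 * ln (snd p0) + xlog (fst p0) 1 = xlog (fst p0) (snd p0)"
      by (rule xlog_eq_ln_add[symmetric]) (use p0 True in \<open>auto simp: xlog_domain_def\<close>)
    ultimately show ?thesis using Lim_transform_eventually[OF _ ev] by simp
  next
    case False
    then have z: "snd p0 = 0" "fst p0 = 0" using p0 by (auto simp: xlog_domain_def)
    have evD: "\<forall>\<^sub>F p in at p0 within xlog_domain. p \<in> xlog_domain" by (simp add: eventually_at_filter)
    have l: "(snd \<longlongrightarrow> snd p0) (at p0 within xlog_domain)" by (intro tendsto_intros)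
    show ?thesis
    proof (rule tendsto_sandwich[where f="\<lambda>p. 0" and h="snd"])
      show "\<forall>\<^sub>F n in at p0 within xlog_domain. 0 \<le> xlog (fst n) (snd n)"
        using evD by eventually_elim (auto simp: xlog_domain_def intro: xlog_nonneg)
      show "\<forall>\<^sub>F n in at p0 within xlog_domain. xlog (fst n) (snd n) \<le> snd n"
        using evD by eventually_elim (auto simp: xlog_domain_def intro: xlog_le_right)
      show "((\<lambda>n. 0) \<longlongrightarrow> xlog (fst p0) (snd p0)) (at p0 within xlog_domain)" using z by simp
      show "(snd \<longlongrightarrow> xlog (fst p0) (snd p0)) (at p0 within xlog_domain)" using l z by simp
    qed
  qed
qed

lemma continuous_on_xlog:
  assumes "continuous_on V a" "continuous_on V b" "\<And>v. v \<in> V \<Longrightarrow> 0 \<le> a v \<and> a v \<le> b v"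
  shows "continuous_on V (\<lambda>v. xlog (a v) (b v))"
proof -
  have "continuous_on V (\<lambda>v. (\<lambda>p. xlog (fst p) (snd p)) (a v, b v))"
  proof (rule continuous_on_compose2[OF continuous_on_xlog_pair])
    show "continuous_on V (\<lambda>v. (a v, b v))" using assms by (intro continuous_intros)
    show "(\<lambda>v. (a v, b v)) ` V \<subseteq> xlog_domain" using assms(3) by (auto simp: xlog_domain_def)
  qed
  then show ?thesis by simp
qed

locale preprocessed_game =
  fixes S :: "'i::finite \<Rightarrow> 's::finite set"
    and A :: "'i \<Rightarrow> 'a::finite set"
    and Tr :: "'i \<Rightarrow> 's \<Rightarrow> 'a \<Rightarrow> 's \<Rightarrow> real"
    and sI :: "'i \<Rightarrow> 's"
    and ST SA :: "('i \<Rightarrow> 's) set"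
    and K :: real
  assumes sI: "\<forall>i. sI i \<in> S i"
    and A_ne: "\<forall>i. A i \<noteq> {}"
    and Tr_nonneg: "\<forall>i u c y. 0 \<le> Tr i u c y"
    and Tr_sum: "\<forall>i. \<forall>u\<in>S i. \<forall>c\<in>A i. (\<Sum>y\<in>S i. Tr i u c y) = 1"
    and Tr_out: "\<forall>i u c y. y \<notin> S i \<longrightarrow> Tr i u c y = 0"
    and K: "K \<ge> 0"
    and bound: "\<forall>pol. pp_policy S A ST (dead_set S A Tr ST SA) pol \<longrightarrow>
                  (\<forall>s \<in> jstates S - (ST \<union> dead_set S A Tr ST SA).
                     (\<Sum>a\<in>Some ` jactions A. pocc S A Tr sI ST SA pol s a) \<le> ennreal K)"
begin

abbreviation "Dead \<equiv> dead_set S A Tr ST SA"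
abbreviation "JS \<equiv> jstates S"
abbreviation "Stop \<equiv> ST \<union> Dead"
abbreviation "PK \<equiv> pkernel Tr ST Dead"
abbreviation "Av \<equiv> avail A ST Dead"
abbreviation "policy \<equiv> pp_policy S A ST Dead"
abbreviation "hist pol h x \<equiv> pathprob PK pol (Some sI) h x"

lemma sI_in_JS: "sI \<in> JS" using sI by (simp add: jstates_def)

lemma jactions_nonempty: "jactions A \<noteq> {}"
proof -
  have "(\<lambda>i. SOME a. a \<in> A i) \<in> jactions A"
    using A_ne by (auto simp: jactions_def some_in_eq)
  then show ?thesis by auto
qed

lemma PK_None: "PK None u y = 0" by (simp add: pkernel_def)

lemma jkernel_nonneg: "0 \<le> jkernel Tr s a y"
  using Tr_nonneg by (auto simp: jkernel_def intro!: prod_nonneg)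

lemma PK_nonneg: "0 \<le> PK x u y"
  using jkernel_nonneg by (auto simp: pkernel_def split: option.splits)

lemma jkernel_nonzero: "jkernel Tr s a y \<noteq> 0 \<Longrightarrow> y \<in> JS"
  unfolding jkernel_def jstates_def by auto (metis Tr_out)

lemma jkernel_sum_one:
  assumes "s \<in> JS" "a \<in> jactions A"
  shows "(\<Sum>y\<in>UNIV. jkernel Tr s a y) = 1"
proof -
  have "\<And>i. (\<Sum>v\<in>UNIV. Tr i (s i) (a i) v) = 1"
  proof -
    fix i
    have "(\<Sum>v\<in>UNIV. Tr i (s i) (a i) v) = (\<Sum>v\<in>S i. Tr i (s i) (a i) v)"
      using Tr_out by (intro sum.mono_neutral_right) auto
    also have "\<dots> = 1" using Tr_sum assms by (auto simp: jstates_def jactions_def)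
    finally show "(\<Sum>v\<in>UNIV. Tr i (s i) (a i) v) = 1" .
  qed
  then show ?thesis by (simp add: jkernel_sum_UNIV)
qed

lemma Av_not_stop: "s \<notin> Stop \<Longrightarrow> Av s = Some ` jactions A" by (simp add: avail_def)
lemma finite_Av: "finite (Av s)" by (simp add: avail_def)
lemma Av_nonempty: "Av s \<noteq> {}" using jactions_nonempty by (simp add: avail_def)

lemma PK_sum_one:
  assumes "s \<in> JS" "u \<in> Av s"
  shows "(\<Sum>y\<in>UNIV. PK (Some s) u y) = 1"
proof (cases "s \<in> Stop")
  case True
  then have "u = None" using assms by (simp add: avail_def)
  then show ?thesis using True by (simp add: pkernel_def sum_UNIV_option)
next
  case False
  then obtain a where a: "u = Some a" "a \<in> jactions A" using assms by (auto simp: avail_def)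
  then show ?thesis using False jkernel_sum_one[OF assms(1) a(2)]
    by (simp add: pkernel_def sum_UNIV_option)
qed

lemma PK_Some_nonzero:
  assumes "PK (Some s) u (Some y) \<noteq> 0"
  shows "s \<notin> Stop \<and> (\<exists>a. u = Some a \<and> jkernel Tr s a y \<noteq> 0)"
  using assms by (auto simp: pkernel_def split: option.splits if_splits)

lemma PK_None_nonzero:
  assumes "PK (Some s) u None \<noteq> 0"
  shows "s \<in> Stop \<and> u = None"
  using assms by (auto simp: pkernel_def split: option.splits if_splits)

lemma PK_le_one:
  assumes "s \<in> JS" "u \<in> Av s"
  shows "PK (Some s) u y \<le> 1"
proof -
  have "PK (Some s) u y \<le> (\<Sum>y\<in>UNIV. PK (Some s) u y)"
    by (rule member_le_sum) (auto simp: PK_nonneg)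
  then show ?thesis using PK_sum_one[OF assms] by simp
qed

inductive_set Reach where
  Reach_init: "sI \<in> Reach"
| Reach_step: "s \<in> Reach \<Longrightarrow> s \<notin> Stop \<Longrightarrow> a \<in> jactions A \<Longrightarrow> jkernel Tr s a y \<noteq> 0 \<Longrightarrow> y \<in> Reach"

lemma Reach_JS: "s \<in> Reach \<Longrightarrow> s \<in> JS"
  by (induction rule: Reach.induct) (auto simp: sI_in_JS jkernel_nonzero)

lemma policy_nonneg: "policy pol \<Longrightarrow> 0 \<le> pol h x u"
  by (simp add: pp_policy_def)

lemma policy_outside_Av: "policy pol \<Longrightarrow> s \<in> JS \<Longrightarrow> u \<notin> Av s \<Longrightarrow> pol h (Some s) u = 0"
  by (simp add: pp_policy_def)

lemma policy_sum_one: "policy pol \<Longrightarrow> s \<in> JS \<Longrightarrow> (\<Sum>u\<in>UNIV. pol h (Some s) u) = 1"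
proof -
  assume v: "policy pol" and s: "s \<in> JS"
  have "(\<Sum>u\<in>UNIV. pol h (Some s) u) = (\<Sum>u\<in>Av s. pol h (Some s) u)"
    using policy_outside_Av[OF v s] by (intro sum.mono_neutral_right) auto
  also have "\<dots> = 1" using v s by (simp add: pp_policy_def)
  finally show ?thesis .
qed

lemma policy_le_one: "policy pol \<Longrightarrow> s \<in> JS \<Longrightarrow> pol h (Some s) u \<le> 1"
proof -
  assume v: "policy pol" and s: "s \<in> JS"
  have "pol h (Some s) u \<le> (\<Sum>u\<in>UNIV. pol h (Some s) u)"
    by (rule member_le_sum) (auto simp: policy_nonneg[OF v])
  then show ?thesis using policy_sum_one[OF v s] by simp
qed

lemma policy_PK_sum_one:
  assumes "policy pol" "s \<in> JS"
  shows "(\<Sum>u\<in>UNIV. pol h (Some s) u * (\<Sum>y\<in>UNIV. PK (Some s) u y)) = 1"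
proof -
  have "(\<Sum>u\<in>UNIV. pol h (Some s) u * (\<Sum>y\<in>UNIV. PK (Some s) u y)) = (\<Sum>u\<in>UNIV. pol h (Some s) u)"
  proof (rule sum.cong[OF refl])
    fix u show "pol h (Some s) u * (\<Sum>y\<in>UNIV. PK (Some s) u y) = pol h (Some s) u"
      using PK_sum_one[OF assms(2)] policy_outside_Av[OF assms] by (cases "u \<in> Av s") auto
  qed
  then show ?thesis using policy_sum_one[OF assms] by simp
qed

lemma hist_nonneg: "policy pol \<Longrightarrow> 0 \<le> hist pol h x"
  by (rule pathprob_nonneg) (auto simp: policy_nonneg PK_nonneg)

lemma hist_nonzero_Reach: "policy pol \<Longrightarrow> hist pol h (Some y) \<noteq> 0 \<Longrightarrow> y \<in> Reach"
proof (induction h arbitrary: y rule: rev_induct)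
  case Nil
  then show ?case by (simp add: pathprob_Nil split: if_splits) (rule Reach_init)
next
  case (snoc p h)
  obtain x u where p: "p = (x,u)" by (cases p)
  have nz: "hist pol h x \<noteq> 0" "pol h x u \<noteq> 0" "PK x u (Some y) \<noteq> 0"
    using snoc.prems by (auto simp: p pathprob_snoc)
  then obtain s where x: "x = Some s" by (cases x) (auto simp: PK_None)
  have sR: "s \<in> Reach" using snoc.IH[OF snoc.prems(1)] nz x by simp
  obtain a where a: "s \<notin> Stop" "u = Some a" "jkernel Tr s a y \<noteq> 0"
    using PK_Some_nonzero nz x by blast
  have "Some a \<in> Av s" using policy_outside_Av[OF snoc.prems(1) Reach_JS[OF sR]] nz a x by blast
  then have "a \<in> jactions A" using a by (auto simp: avail_def)
  then show ?case using Reach_step[OF sR a(1) _ a(3)] by simp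
qed

lemma hist_not_JS: "policy pol \<Longrightarrow> s \<notin> JS \<Longrightarrow> hist pol h (Some s) = 0"
  using hist_nonzero_Reach Reach_JS by blast

lemma hist_mass_step:
  assumes "policy pol"
  shows "hist pol h x * (\<Sum>u\<in>UNIV. pol h x u * (\<Sum>y\<in>UNIV. PK x u y)) \<le> hist pol h x"
proof (cases x)
  case None
  then show ?thesis by (simp add: PK_None hist_nonneg[OF assms])
next
  case (Some s)
  show ?thesis
  proof (cases "s \<in> JS")
    case True
    then show ?thesis using policy_PK_sum_one[OF assms True] Some by simp
  next
    case False
    then show ?thesis using hist_not_JS[OF assms False] Some by simp
  qed
qed

lemma hist_total_le_one: "policy pol \<Longrightarrow> (\<Sum>h\<in>{h. length h = t}. \<Sum>x\<in>UNIV. hist pol h x) \<le> 1"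
proof (induction t)
  case 0
  then show ?case by (simp add: pathprob_Nil)
next
  case (Suc t)
  have "(\<Sum>h\<in>{h. length h = Suc t}. \<Sum>y\<in>UNIV. hist pol h y)
      = (\<Sum>h\<in>{h. length h = t}. \<Sum>p\<in>UNIV. \<Sum>y\<in>UNIV. hist pol (h @ [p]) y)"
    by (rule sum_lists_length_Suc)
  also have "\<dots> = (\<Sum>h\<in>{h. length h = t}. \<Sum>x\<in>UNIV. hist pol h x * (\<Sum>u\<in>UNIV. pol h x u * (\<Sum>y\<in>UNIV. PK x u y)))"
    by (rule sum.cong[OF refl]) (simp add: sum_UNIV_prod pathprob_snoc sum_distrib_left mult.assoc)
  also have "\<dots> \<le> (\<Sum>h\<in>{h. length h = t}. \<Sum>x\<in>UNIV. hist pol h x)"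
    by (intro sum_mono hist_mass_step Suc.prems)
  finally show ?case using Suc by simp
qed

lemma hist_le_one: "policy pol \<Longrightarrow> hist pol h x \<le> 1"
proof -
  assume v: "policy pol"
  have "hist pol h x \<le> (\<Sum>x\<in>UNIV. hist pol h x)"
    by (rule member_le_sum) (auto simp: hist_nonneg[OF v])
  also have "\<dots> \<le> (\<Sum>h\<in>{h'. length h' = length h}. \<Sum>x\<in>UNIV. hist pol h x)"
    by (rule member_le_sum) (auto simp: hist_nonneg[OF v] finite_lists_length intro: sum_nonneg)
  also have "\<dots> \<le> 1" by (rule hist_total_le_one[OF v])
  finally show ?thesis .
qed


abbreviation "visit pol t s \<equiv> visit_prob PK pol (Some sI) t (Some s)"
abbreviation "act pol t s u \<equiv> act_prob PK pol (Some sI) t (Some s) u"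
abbreviation "occ pol \<equiv> xocc S A Tr sI ST SA pol"

definition "occ_bound = 1 + real (card JS) * K"

lemma card_JS_ge_1: "1 \<le> card JS"
  using sI_in_JS by (metis One_nat_def Suc_leI card_gt_0_iff empty_iff finite)

lemma occ_bound_ge: "K \<le> occ_bound" "1 \<le> occ_bound"
proof -
  have "K \<le> real (card JS) * K" using card_JS_ge_1 K
    by (metis mult_le_cancel_right1 of_nat_1 of_nat_le_iff order.strict_iff_not)
  then show "K \<le> occ_bound" using K by (simp add: occ_bound_def)
  show "1 \<le> occ_bound" using K by (simp add: occ_bound_def)
qed

lemma visit_nonneg: "policy pol \<Longrightarrow> 0 \<le> visit_prob PK pol (Some sI) t x"
  unfolding visit_prob_def by (auto intro!: sum_nonneg hist_nonneg)

lemma act_nonneg: assumes v: "policy pol" shows "0 \<le> act_prob PK pol (Some sI) t x u"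
  unfolding act_prob_def by (intro sum_nonneg mult_nonneg_nonneg hist_nonneg[OF v] policy_nonneg[OF v])

lemma act_not_JS: "policy pol \<Longrightarrow> s \<notin> JS \<Longrightarrow> act pol t s u = 0"
  unfolding act_prob_def by (simp add: hist_not_JS)

lemma visit_not_JS: "policy pol \<Longrightarrow> s \<notin> JS \<Longrightarrow> visit pol t s = 0"
  unfolding visit_prob_def by (simp add: hist_not_JS)

lemma act_not_Reach: "policy pol \<Longrightarrow> s \<notin> Reach \<Longrightarrow> act pol t s u = 0"
  unfolding act_prob_def using hist_nonzero_Reach by (metis (no_types, lifting) mult_eq_0_iff sum.neutral)

lemma act_outside_Av: "policy pol \<Longrightarrow> s \<in> JS \<Longrightarrow> u \<notin> Av s \<Longrightarrow> act pol t s u = 0"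
  unfolding act_prob_def by (simp add: policy_outside_Av)

lemma act_sum: "policy pol \<Longrightarrow> s \<in> JS \<Longrightarrow> (\<Sum>u\<in>UNIV. act pol t s u) = visit pol t s"
  unfolding act_prob_def visit_prob_def
  by (subst sum.swap) (simp add: sum_distrib_left[symmetric] policy_sum_one)

lemma act_le_visit: "policy pol \<Longrightarrow> act pol t s u \<le> visit pol t s"
proof (cases "s \<in> JS")
  case True
  assume v: "policy pol"
  show ?thesis unfolding act_prob_def visit_prob_def
    by (intro sum_mono) (auto intro!: mult_left_le hist_nonneg v policy_le_one True)
next
  case False
  assume v: "policy pol"
  then show ?thesis using act_not_JS visit_not_JS False by simp
qed

lemma visit_Suc:
  assumes v: "policy pol"
  shows "visit pol (Suc t) y = (\<Sum>s\<in>JS. \<Sum>u\<in>UNIV. act pol t s u * PK (Some s) u (Some y))"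
proof -
  have "visit pol (Suc t) y = (\<Sum>x\<in>UNIV. \<Sum>u\<in>UNIV. act_prob PK pol (Some sI) t x u * PK x u (Some y))"
    by (rule visit_prob_Suc)
  also have "\<dots> = (\<Sum>s\<in>UNIV. \<Sum>u\<in>UNIV. act pol t s u * PK (Some s) u (Some y))"
    by (simp add: sum_UNIV_option PK_None)
  also have "\<dots> = (\<Sum>s\<in>JS. \<Sum>u\<in>UNIV. act pol t s u * PK (Some s) u (Some y))"
    using act_not_JS[OF v] by (intro sum.mono_neutral_right) auto
  finally show ?thesis .
qed

lemma pocc_eq_suminf_act: "pocc S A Tr sI ST SA pol s u = (\<Sum>t. ennreal (act pol t s u))"
  by (simp add: pocc_def occ_gen_act_prob)

lemma visits_not_stop_bounded:
  assumes v: "policy pol" and s: "s \<in> JS" "s \<notin> Stop"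
  shows "summable (\<lambda>t. visit pol t s) \<and> suminf (\<lambda>t. visit pol t s) \<le> K"
proof -
  have "(\<Sum>t. ennreal (visit pol t s)) = (\<Sum>t. \<Sum>u\<in>Av s. ennreal (act pol t s u))"
  proof (rule suminf_cong)
    fix t
    have "visit pol t s = (\<Sum>u\<in>UNIV. act pol t s u)" using act_sum[OF v s(1)] by simp
    also have "\<dots> = (\<Sum>u\<in>Av s. act pol t s u)"
      using act_outside_Av[OF v s(1)] by (intro sum.mono_neutral_right) auto
    finally show "ennreal (visit pol t s) = (\<Sum>u\<in>Av s. ennreal (act pol t s u))"
      by (simp add: act_nonneg[OF v])
  qed
  also have "\<dots> = (\<Sum>u\<in>Av s. \<Sum>t. ennreal (act pol t s u))"
    by (rule suminf_sum) (simp add: summableI)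
  also have "\<dots> = (\<Sum>a\<in>Some ` jactions A. pocc S A Tr sI ST SA pol s a)"
    using Av_not_stop[OF s(2)] by (simp add: pocc_eq_suminf_act)
  also have "\<dots> \<le> ennreal K"
  proof -
    have "s \<in> JS - Stop" using s by simp
    then show ?thesis using bound v by simp
  qed
  finally have le: "(\<Sum>t. ennreal (visit pol t s)) \<le> ennreal K" .
  have "(\<Sum>t. ennreal (visit pol t s)) < top" using le ennreal_less_top[of K] by (rule le_less_trans)
  then have fin: "(\<Sum>t. ennreal (visit pol t s)) \<noteq> top" by simp
  have sm: "summable (\<lambda>t. visit pol t s)"
    by (rule summable_suminf_not_top[OF visit_nonneg[OF v] fin])
  have "ennreal (suminf (\<lambda>t. visit pol t s)) \<le> ennreal K"
    using le suminf_ennreal2[OF visit_nonneg[OF v] sm] by simp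
  then have "suminf (\<lambda>t. visit pol t s) \<le> K" using K by (simp add: ennreal_le_iff)
  then show ?thesis using sm by simp
qed

lemma visit_partial_sum_le:
  assumes v: "policy pol" and s: "s \<in> JS"
  shows "(\<Sum>t<Suc N. visit pol t s) \<le> 1 + (\<Sum>s'\<in>JS - Stop. \<Sum>t<N. visit pol t s')"
proof -
  have step: "visit pol (Suc t) s \<le> (\<Sum>s'\<in>JS - Stop. visit pol t s')" for t
  proof -
    have "visit pol (Suc t) s = (\<Sum>s'\<in>JS. \<Sum>u\<in>UNIV. act pol t s' u * PK (Some s') u (Some s))"
      by (rule visit_Suc[OF v])
    also have "\<dots> = (\<Sum>s'\<in>JS - Stop. \<Sum>u\<in>UNIV. act pol t s' u * PK (Some s') u (Some s))"
    proof (intro sum.mono_neutral_right)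
      have z: "\<And>s' u. s' \<in> Stop \<Longrightarrow> PK (Some s') u (Some s) = 0" using PK_Some_nonzero by blast
      show "\<forall>i\<in>JS - (JS - Stop). (\<Sum>u\<in>UNIV. act pol t i u * PK (Some i) u (Some s)) = 0"
        using z by simp
    qed auto
    also have "\<dots> \<le> (\<Sum>s'\<in>JS - Stop. \<Sum>u\<in>UNIV. act pol t s' u)"
    proof (intro sum_mono)
      fix s' u assume s': "s' \<in> JS - Stop"
      show "act pol t s' u * PK (Some s') u (Some s) \<le> act pol t s' u"
      proof (cases "u \<in> Av s'")
        case True
        then show ?thesis using PK_le_one[of s' u] s' act_nonneg[OF v]
          by (simp add: mult_left_le)
      next
        case False
        then show ?thesis using act_outside_Av[OF v, of s' u t] s' by simp
      qed
    qed
    also have "\<dots> = (\<Sum>s'\<in>JS - Stop. visit pol t s')"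
      using act_sum[OF v] by simp
    finally show ?thesis .
  qed
  have "(\<Sum>t<Suc N. visit pol t s) = visit pol 0 s + (\<Sum>t<N. visit pol (Suc t) s)"
    by (rule sum.lessThan_Suc_shift)
  also have "visit pol 0 s \<le> 1" by (simp add: visit_prob_0)
  also have "(\<Sum>t<N. visit pol (Suc t) s) \<le> (\<Sum>t<N. \<Sum>s'\<in>JS - Stop. visit pol t s')"
    by (intro sum_mono step)
  also have "\<dots> = (\<Sum>s'\<in>JS - Stop. \<Sum>t<N. visit pol t s')" by (rule sum.swap)
  finally show ?thesis by simp
qed

lemma visits_summable:
  assumes v: "policy pol"
  shows "summable (\<lambda>t. visit pol t s) \<and> suminf (\<lambda>t. visit pol t s) \<le> occ_bound"
proof (cases "s \<in> JS")
  case False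
  then show ?thesis using visit_not_JS[OF v False] occ_bound_ge by simp
next
  case s: True
  show ?thesis
  proof (cases "s \<in> Stop")
    case False
    then show ?thesis using visits_not_stop_bounded[OF v s False] occ_bound_ge by linarith
  next
    case True
    have part: "(\<Sum>t<N. visit pol t s) \<le> occ_bound" for N
    proof -
      have "(\<Sum>t<N. visit pol t s) \<le> (\<Sum>t<Suc N. visit pol t s)"
        by (simp add: visit_nonneg[OF v])
      also have "\<dots> \<le> 1 + (\<Sum>s'\<in>JS - Stop. \<Sum>t<N. visit pol t s')" by (rule visit_partial_sum_le[OF v s])
      also have "\<dots> \<le> 1 + (\<Sum>s'\<in>JS - Stop. K)"
      proof -
        have "(\<Sum>t<N. visit pol t s') \<le> K" if "s' \<in> JS - Stop" for s'
        proof -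
          have b: "summable (\<lambda>t. visit pol t s') \<and> suminf (\<lambda>t. visit pol t s') \<le> K"
            using visits_not_stop_bounded[OF v] that by blast
          then have "(\<Sum>t<N. visit pol t s') \<le> suminf (\<lambda>t. visit pol t s')"
            by (intro sum_le_suminf) (auto simp: visit_nonneg[OF v])
          then show ?thesis using b by linarith
        qed
        then have "(\<Sum>s'\<in>JS - Stop. \<Sum>t<N. visit pol t s') \<le> (\<Sum>s'\<in>JS - Stop. K)"
          by (intro sum_mono) blast
        then show ?thesis by simp
      qed
      also have "\<dots> \<le> occ_bound"
      proof -
        have "card (JS - Stop) \<le> card JS" by (rule card_mono) auto
        then have "real (card (JS - Stop)) * K \<le> real (card JS) * K"
          using K by (intro mult_right_mono) auto
        then show ?thesis by (simp add: occ_bound_def)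
      qed
      finally show ?thesis .
    qed
    have sm: "summable (\<lambda>t. visit pol t s)"
      by (rule summableI_nonneg_bounded[where x=occ_bound]) (auto simp: visit_nonneg[OF v] part)
    then show ?thesis using suminf_le_const[OF sm part] by simp
  qed
qed

lemma acts_summable: "policy pol \<Longrightarrow> summable (\<lambda>t. act pol t s u)"
  using visits_summable by (rule_tac summable_comparison_test[where g="\<lambda>t. visit pol t s"])
    (auto simp: act_nonneg act_le_visit)

lemma occ_eq_suminf: "policy pol \<Longrightarrow> occ pol s u = (\<Sum>t. act pol t s u)"
proof -
  assume v: "policy pol"
  have "0 \<le> (\<Sum>t. act pol t s u)" by (rule suminf_nonneg[OF acts_summable[OF v] act_nonneg[OF v]])
  then show ?thesis unfolding xocc_def pocc_eq_suminf_act
    by (subst suminf_ennreal2) (auto simp: act_nonneg[OF v] acts_summable[OF v])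
qed

lemma occ_nonneg: "policy pol \<Longrightarrow> 0 \<le> occ pol s u"
  by (simp add: occ_eq_suminf act_nonneg acts_summable suminf_nonneg)

lemma occ_sum_eq_suminf_visit: "policy pol \<Longrightarrow> s \<in> JS \<Longrightarrow> (\<Sum>u\<in>UNIV. occ pol s u) = (\<Sum>t. visit pol t s)"
  by (simp add: occ_eq_suminf suminf_sum[symmetric] acts_summable act_sum)

lemma occ_flow:
  assumes v: "policy pol" and y: "y \<in> JS"
  shows "(\<Sum>u\<in>UNIV. occ pol y u) = (if y = sI then 1 else 0) + (\<Sum>s\<in>JS. \<Sum>u\<in>UNIV. occ pol s u * PK (Some s) u (Some y))"
proof -
  have sm: "summable (\<lambda>t. visit pol t y)" using visits_summable[OF v] by blast
  have "(\<Sum>u\<in>UNIV. occ pol y u) = (\<Sum>t. visit pol t y)" by (rule occ_sum_eq_suminf_visit[OF v y])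
  also have "\<dots> = visit pol 0 y + (\<Sum>t. visit pol (Suc t) y)"
    using suminf_split_head[OF sm] by simp
  also have "(\<Sum>t. visit pol (Suc t) y) = (\<Sum>t. \<Sum>s\<in>JS. \<Sum>u\<in>UNIV. act pol t s u * PK (Some s) u (Some y))"
    by (simp add: visit_Suc[OF v])
  also have "\<dots> = (\<Sum>s\<in>JS. \<Sum>u\<in>UNIV. \<Sum>t. act pol t s u * PK (Some s) u (Some y))"
    by (subst suminf_sum, auto intro!: summable_sum summable_mult2 acts_summable[OF v])
       (subst suminf_sum, auto intro!: summable_mult2 acts_summable[OF v])
  also have "\<dots> = (\<Sum>s\<in>JS. \<Sum>u\<in>UNIV. occ pol s u * PK (Some s) u (Some y))"
    by (simp add: occ_eq_suminf[OF v] suminf_mult2 acts_summable[OF v])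
  finally show ?thesis by (simp add: visit_prob_0)
qed

lemma occ_nonzero_Reach: "policy pol \<Longrightarrow> occ pol s u \<noteq> 0 \<Longrightarrow> s \<in> Reach \<and> u \<in> Av s"
proof -
  assume v: "policy pol" and nz: "occ pol s u \<noteq> 0"
  have "s \<in> Reach"
  proof (rule ccontr)
    assume ns: "s \<notin> Reach"
    have "occ pol s u = (\<Sum>t. 0::real)" unfolding occ_eq_suminf[OF v] by (simp add: act_not_Reach[OF v ns])
    then show False using nz by simp
  qed
  moreover have "u \<in> Av s"
  proof (rule ccontr)
    assume nu: "u \<notin> Av s"
    have "occ pol s u = (\<Sum>t. 0::real)"
      unfolding occ_eq_suminf[OF v] by (simp add: act_outside_Av[OF v Reach_JS[OF \<open>s \<in> Reach\<close>] nu])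
    then show False using nz by simp
  qed
  ultimately show ?thesis by simp
qed

lemma occ_le_bound: "policy pol \<Longrightarrow> occ pol s u \<le> occ_bound"
proof -
  assume v: "policy pol"
  have "occ pol s u \<le> (\<Sum>t. visit pol t s)"
    unfolding occ_eq_suminf[OF v] using visits_summable[OF v, of s]
    by (intro suminf_le act_le_visit[OF v] acts_summable[OF v]) blast
  then show ?thesis using visits_summable[OF v, of s] by linarith
qed

definition "Flows = {\<xi>. (\<forall>s u. 0 \<le> \<xi> s u) \<and> (\<forall>s u. \<xi> s u \<noteq> 0 \<longrightarrow> s \<in> Reach \<and> u \<in> Av s) \<and> (\<forall>s u. \<xi> s u \<le> occ_bound) \<and>
   (\<forall>y\<in>JS. (\<Sum>u\<in>UNIV. \<xi> y u) = (if y = sI then 1 else 0) + (\<Sum>s\<in>JS. \<Sum>u\<in>UNIV. \<xi> s u * PK (Some s) u (Some y)))}"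

lemma occ_in_Flows: "policy pol \<Longrightarrow> occ pol \<in> Flows"
proof -
  assume v: "policy pol"
  show ?thesis unfolding Flows_def
  proof (intro CollectI conjI allI impI ballI)
    fix s u show "0 \<le> occ pol s u" by (rule occ_nonneg[OF v])
  next
    fix s u assume "occ pol s u \<noteq> 0" then show "s \<in> Reach" using occ_nonzero_Reach[OF v] by blast
  next
    fix s u assume "occ pol s u \<noteq> 0" then show "u \<in> Av s" using occ_nonzero_Reach[OF v] by blast
  next
    fix s u show "occ pol s u \<le> occ_bound" by (rule occ_le_bound[OF v])
  next
    fix y assume "y \<in> JS" then show "(\<Sum>u\<in>UNIV. occ pol y u) = (if y = sI then 1 else 0) + (\<Sum>s\<in>JS. \<Sum>u\<in>UNIV. occ pol s u * PK (Some s) u (Some y))"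
      by (rule occ_flow[OF v])
  qed
qed

text \<open>Chain rule for the trajectory entropy: step_ent T is the entropy added at time T,
  state_ent T the entropy of the current state after T steps and end_ent T the part of the
  entropy of trajectories that end after T steps, so H(X) is the sum of all end_ent T.\<close>

definition "state_ent pol T = (\<Sum>h\<in>{h. length h = T}. \<Sum>s\<in>JS. xlog (hist pol h (Some s)) 1)"
definition "end_ent pol T = (\<Sum>h\<in>{h. length h = T}. xlog (hist pol h None) 1)"
definition "trans_ent x u = (\<Sum>y\<in>UNIV. xlog (PK x u y) 1)"
definition "step_ent pol T = (\<Sum>h\<in>{h. length h = T}. \<Sum>s\<in>JS. \<Sum>u\<in>UNIV.
    xlog (hist pol h (Some s) * pol h (Some s) u) (hist pol h (Some s)) + hist pol h (Some s) * pol h (Some s) u * trans_ent (Some s) u)"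

lemma trans_ent_nonneg: "s \<in> JS \<Longrightarrow> u \<in> Av s \<Longrightarrow> 0 \<le> trans_ent (Some s) u"
  unfolding trans_ent_def by (intro sum_nonneg xlog_nonneg PK_nonneg PK_le_one) auto

lemma xlog_hist_step:
  assumes v: "policy pol" and s: "s \<in> JS"
  shows "(\<Sum>y\<in>UNIV. xlog (hist pol h (Some s) * pol h (Some s) u * PK (Some s) u y) 1)
     = xlog (hist pol h (Some s)) 1 * pol h (Some s) u * (\<Sum>y\<in>UNIV. PK (Some s) u y)
       + xlog (hist pol h (Some s) * pol h (Some s) u) (hist pol h (Some s))
       + hist pol h (Some s) * pol h (Some s) u * trans_ent (Some s) u"
proof -
  let ?a = "hist pol h (Some s)" and ?b = "pol h (Some s) u"
  have a: "0 \<le> ?a" "0 \<le> ?b" using hist_nonneg[OF v] policy_nonneg[OF v] by auto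
  have "(\<Sum>y\<in>UNIV. xlog (?a * ?b * PK (Some s) u y) 1)
     = (\<Sum>y\<in>UNIV. ?b * PK (Some s) u y * xlog ?a 1 + ?a * PK (Some s) u y * xlog ?b 1 + ?a * ?b * xlog (PK (Some s) u y) 1)"
    using a by (intro sum.cong refl xlog_mult3_one PK_nonneg)
  also have "\<dots> = (\<Sum>y\<in>UNIV. (xlog ?a 1 * ?b) * PK (Some s) u y + (?a * xlog ?b 1) * PK (Some s) u y + (?a * ?b) * xlog (PK (Some s) u y) 1)"
    by (rule sum.cong[OF refl]) (simp add: ac_simps)
  also have "\<dots> = xlog ?a 1 * ?b * (\<Sum>y\<in>UNIV. PK (Some s) u y) + ?a * xlog ?b 1 * (\<Sum>y\<in>UNIV. PK (Some s) u y)
       + ?a * ?b * trans_ent (Some s) u"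
    by (simp only: sum.distrib sum_distrib_left[symmetric] trans_ent_def)
  also have "?a * xlog ?b 1 * (\<Sum>y\<in>UNIV. PK (Some s) u y) = xlog (?a * ?b) ?a"
  proof (cases "u \<in> Av s")
    case True then show ?thesis using PK_sum_one[OF s True] xlog_scale[OF a] by simp
  next
    case False then show ?thesis using policy_outside_Av[OF v s False] by simp
  qed
  finally show ?thesis by simp
qed

lemma hist_ent_Suc:
  assumes v: "policy pol" and s: "s \<in> JS"
  shows "(\<Sum>u\<in>UNIV. \<Sum>y\<in>UNIV. xlog (hist pol h (Some s) * pol h (Some s) u * PK (Some s) u y) 1)
    = xlog (hist pol h (Some s)) 1 + (\<Sum>u\<in>UNIV. xlog (hist pol h (Some s) * pol h (Some s) u) (hist pol h (Some s))
       + hist pol h (Some s) * pol h (Some s) u * trans_ent (Some s) u)"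
proof -
  have "(\<Sum>u\<in>UNIV. \<Sum>y\<in>UNIV. xlog (hist pol h (Some s) * pol h (Some s) u * PK (Some s) u y) 1)
      = (\<Sum>u\<in>UNIV. xlog (hist pol h (Some s)) 1 * (pol h (Some s) u * (\<Sum>y\<in>UNIV. PK (Some s) u y))
       + (xlog (hist pol h (Some s) * pol h (Some s) u) (hist pol h (Some s))
       + hist pol h (Some s) * pol h (Some s) u * trans_ent (Some s) u))"
    by (rule sum.cong[OF refl], subst xlog_hist_step[OF v s]) (simp add: algebra_simps)
  also have "\<dots> = xlog (hist pol h (Some s)) 1 * (\<Sum>u\<in>UNIV. pol h (Some s) u * (\<Sum>y\<in>UNIV. PK (Some s) u y))
       + (\<Sum>u\<in>UNIV. xlog (hist pol h (Some s) * pol h (Some s) u) (hist pol h (Some s))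
       + hist pol h (Some s) * pol h (Some s) u * trans_ent (Some s) u)"
    by (simp add: sum.distrib sum_distrib_left)
  finally show ?thesis using policy_PK_sum_one[OF v s] by simp
qed

lemma ent_step:
  assumes v: "policy pol"
  shows "state_ent pol (Suc T) + end_ent pol (Suc T) = state_ent pol T + step_ent pol T"
proof -
  define G where "G h = (\<Sum>y\<in>UNIV. xlog (hist pol h y) 1)" for h
  have GA: "(\<Sum>s\<in>JS. xlog (hist pol h (Some s)) 1) + xlog (hist pol h None) 1 = G h" for h
  proof -
    have "G h = xlog (hist pol h None) 1 + (\<Sum>s\<in>UNIV. xlog (hist pol h (Some s)) 1)"
      unfolding G_def by (rule sum_UNIV_option)
    also have "(\<Sum>s\<in>UNIV. xlog (hist pol h (Some s)) 1) = (\<Sum>s\<in>JS. xlog (hist pol h (Some s)) 1)"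
      using hist_not_JS[OF v] by (intro sum.mono_neutral_right) auto
    finally show ?thesis by simp
  qed
  have "state_ent pol (Suc T) + end_ent pol (Suc T) = (\<Sum>h\<in>{h. length h = Suc T}. G h)"
    unfolding state_ent_def end_ent_def by (simp add: GA sum.distrib[symmetric])
  also have "\<dots> = (\<Sum>h\<in>{h. length h = T}. \<Sum>p\<in>UNIV. G (h @ [p]))" by (rule sum_lists_length_Suc)
  also have "\<dots> = (\<Sum>h\<in>{h. length h = T}. \<Sum>x\<in>UNIV. \<Sum>u\<in>UNIV. \<Sum>y\<in>UNIV. xlog (hist pol h x * pol h x u * PK x u y) 1)"
    by (rule sum.cong[OF refl]) (simp add: sum_UNIV_prod G_def pathprob_snoc)
  also have "\<dots> = (\<Sum>h\<in>{h. length h = T}. \<Sum>s\<in>JS. \<Sum>u\<in>UNIV. \<Sum>y\<in>UNIV. xlog (hist pol h (Some s) * pol h (Some s) u * PK (Some s) u y) 1)"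
  proof (rule sum.cong[OF refl])
    fix h
    have "(\<Sum>x\<in>UNIV. \<Sum>u\<in>UNIV. \<Sum>y\<in>UNIV. xlog (hist pol h x * pol h x u * PK x u y) 1)
      = (\<Sum>s\<in>UNIV. \<Sum>u\<in>UNIV. \<Sum>y\<in>UNIV. xlog (hist pol h (Some s) * pol h (Some s) u * PK (Some s) u y) 1)"
      (is "?all = _") by (simp add: sum_UNIV_option PK_None)
    also have "\<dots> = (\<Sum>s\<in>JS. \<Sum>u\<in>UNIV. \<Sum>y\<in>UNIV. xlog (hist pol h (Some s) * pol h (Some s) u * PK (Some s) u y) 1)"
      (is "_ = ?JS") using hist_not_JS[OF v] by (intro sum.mono_neutral_right) auto
    finally show "?all = ?JS" .
  qed
  also have "\<dots> = (\<Sum>h\<in>{h. length h = T}. \<Sum>s\<in>JS. xlog (hist pol h (Some s)) 1 + (\<Sum>u\<in>UNIV.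
      xlog (hist pol h (Some s) * pol h (Some s) u) (hist pol h (Some s)) + hist pol h (Some s) * pol h (Some s) u * trans_ent (Some s) u))"
    using hist_ent_Suc[OF v] by (intro sum.cong refl) simp
  also have "\<dots> = state_ent pol T + step_ent pol T"
    unfolding state_ent_def step_ent_def by (simp add: sum.distrib)
  finally show ?thesis .
qed

lemma state_ent_0: "state_ent pol 0 = 0"
proof -
  have "\<And>s. xlog (if Some s = Some sI then 1 else 0) 1 = 0" by (simp add: xlog_def)
  then show ?thesis by (simp add: state_ent_def pathprob_Nil del: option.inject)
qed

lemma end_ent_0: "end_ent pol 0 = 0"
  by (simp add: end_ent_def pathprob_Nil)

lemma ent_telescope:
  assumes v: "policy pol"
  shows "(\<Sum>t<Suc T. end_ent pol t) + state_ent pol T = (\<Sum>t<T. step_ent pol t)"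
proof (induction T)
  case 0 then show ?case by (simp add: state_ent_0 end_ent_0)
next
  case (Suc T)
  have "(\<Sum>t<Suc (Suc T). end_ent pol t) + state_ent pol (Suc T) = (\<Sum>t<Suc T. end_ent pol t) + (end_ent pol (Suc T) + state_ent pol (Suc T))"
    by simp
  also have "\<dots> = (\<Sum>t<Suc T. end_ent pol t) + state_ent pol T + step_ent pol T" using ent_step[OF v, of T] by simp
  also have "\<dots> = (\<Sum>t<Suc T. step_ent pol t)" using Suc by simp
  finally show ?case .
qed

lemma state_ent_nonneg: "policy pol \<Longrightarrow> 0 \<le> state_ent pol T"
  unfolding state_ent_def by (intro sum_nonneg xlog_nonneg hist_nonneg hist_le_one)

lemma end_ent_nonneg: "policy pol \<Longrightarrow> 0 \<le> end_ent pol T"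
  unfolding end_ent_def by (intro sum_nonneg xlog_nonneg hist_nonneg hist_le_one)

lemma H_X_eq_end_ent: "H_X S A Tr sI ST SA pol = enn2real (\<Sum>t. ennreal (end_ent pol t))"
  by (simp add: H_X_def end_ent_def)

definition "occ_ent \<xi> = (\<Sum>s\<in>JS. \<Sum>u\<in>UNIV. xlog (\<xi> s u) (\<Sum>u'\<in>UNIV. \<xi> s u') + \<xi> s u * trans_ent (Some s) u)"

lemma step_ent_swap:
  "step_ent pol t = (\<Sum>s\<in>JS. \<Sum>u\<in>UNIV. (\<Sum>h\<in>{h. length h = t}. xlog (hist pol h (Some s) * pol h (Some s) u) (hist pol h (Some s)))
      + act pol t s u * trans_ent (Some s) u)"
proof -
  have "step_ent pol t = (\<Sum>s\<in>JS. \<Sum>h\<in>{h. length h = t}. \<Sum>u\<in>UNIV.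
    xlog (hist pol h (Some s) * pol h (Some s) u) (hist pol h (Some s)) + hist pol h (Some s) * pol h (Some s) u * trans_ent (Some s) u)"
    unfolding step_ent_def by (rule sum.swap)
  also have "\<dots> = (\<Sum>s\<in>JS. \<Sum>u\<in>UNIV. \<Sum>h\<in>{h. length h = t}.
    xlog (hist pol h (Some s) * pol h (Some s) u) (hist pol h (Some s)) + hist pol h (Some s) * pol h (Some s) u * trans_ent (Some s) u)"
    by (rule sum.cong[OF refl], rule sum.swap)
  also have "\<dots> = (\<Sum>s\<in>JS. \<Sum>u\<in>UNIV. (\<Sum>h\<in>{h. length h = t}. xlog (hist pol h (Some s) * pol h (Some s) u) (hist pol h (Some s)))
      + act pol t s u * trans_ent (Some s) u)"
    by (simp add: sum.distrib act_prob_def sum_distrib_right)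
  finally show ?thesis .
qed

lemma xlog_hist_sum_le:
  assumes v: "policy pol"
  shows "(\<Sum>h\<in>{h. length h = t}. xlog (hist pol h (Some s) * pol h (Some s) u) (hist pol h (Some s)))
     \<le> xlog (act pol t s u) (visit pol t s)"
  unfolding act_prob_def visit_prob_def
proof (rule xlog_sum_le)
  fix h
  show "0 \<le> hist pol h (Some s) * pol h (Some s) u" "0 \<le> hist pol h (Some s)"
    using hist_nonneg[OF v] policy_nonneg[OF v] by auto
  assume "0 < hist pol h (Some s) * pol h (Some s) u"
  then show "0 < hist pol h (Some s)"
    using hist_nonneg[OF v, of h "Some s"] policy_nonneg[OF v, of h "Some s" u]
    by (metis mult_eq_0_iff order_le_less)
qed (simp add: finite_lists_length)

lemma occ_ent_partial_le:
  assumes v: "policy pol" and s: "s \<in> JS"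
  shows "(\<Sum>t<T. \<Sum>h\<in>{h. length h = t}. xlog (hist pol h (Some s) * pol h (Some s) u) (hist pol h (Some s)))
    + (\<Sum>t<T. act pol t s u) * trans_ent (Some s) u
    \<le> xlog (occ pol s u) (\<Sum>u'\<in>UNIV. occ pol s u') + occ pol s u * trans_ent (Some s) u"
proof -
  define QT where "QT = (\<Sum>t<T. act pol t s u)"
  define NT where "NT = (\<Sum>t<T. visit pol t s)"
  define Q where "Q = occ pol s u"
  define N where "N = (\<Sum>u'\<in>UNIV. occ pol s u')"
  have smq: "summable (\<lambda>t. act pol t s u)" by (rule acts_summable[OF v])
  have smn: "summable (\<lambda>t. visit pol t s)" using visits_summable[OF v] by blast
  have Qeq: "Q = (\<Sum>t. act pol t s u)" unfolding Q_def by (rule occ_eq_suminf[OF v])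
  have Neq: "N = (\<Sum>t. visit pol t s)" unfolding N_def by (rule occ_sum_eq_suminf_visit[OF v s])
  have QT0: "0 \<le> QT" unfolding QT_def by (intro sum_nonneg act_nonneg[OF v])
  have QTN: "QT \<le> NT" unfolding QT_def NT_def by (intro sum_mono act_le_visit[OF v])
  have QTQ: "QT \<le> Q" unfolding QT_def Qeq by (rule sum_le_suminf[OF smq]) (auto simp: act_nonneg[OF v])
  have tail: "Q - QT \<le> N - NT"
  proof -
    have smd: "summable (\<lambda>t. visit pol t s - act pol t s u)" by (rule summable_diff[OF smn smq])
    have "(\<Sum>t<T. visit pol t s - act pol t s u) \<le> (\<Sum>t. visit pol t s - act pol t s u)"
      by (rule sum_le_suminf[OF smd]) (auto simp: act_le_visit[OF v])
    then show ?thesis unfolding Qeq Neq QT_def NT_def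
      using suminf_diff[OF smn smq] by (simp add: sum_subtractf)
  qed
  have "(\<Sum>t<T. \<Sum>h\<in>{h. length h = t}. xlog (hist pol h (Some s) * pol h (Some s) u) (hist pol h (Some s)))
     \<le> (\<Sum>t<T. xlog (act pol t s u) (visit pol t s))"
    by (intro sum_mono xlog_hist_sum_le[OF v])
  also have "\<dots> \<le> xlog QT NT" unfolding QT_def NT_def
  proof (rule xlog_sum_le)
    fix t
    show "0 \<le> act pol t s u" "0 \<le> visit pol t s" by (auto simp: act_nonneg[OF v] visit_nonneg[OF v])
    show "0 < act pol t s u \<Longrightarrow> 0 < visit pol t s" using act_le_visit[OF v, of t s u] by linarith
  qed simp
  also have "\<dots> \<le> xlog QT NT + xlog (Q - QT) (N - NT)"
    using xlog_nonneg[of "Q - QT" "N - NT"] QTQ tail by simp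
  also have "\<dots> \<le> xlog (QT + (Q - QT)) (NT + (N - NT))"
    by (rule xlog_add_le) (use QT0 QTN QTQ tail in auto)
  also have "\<dots> = xlog Q N" by simp
  finally have a: "(\<Sum>t<T. \<Sum>h\<in>{h. length h = t}. xlog (hist pol h (Some s) * pol h (Some s) u) (hist pol h (Some s))) \<le> xlog Q N" .
  have b: "QT * trans_ent (Some s) u \<le> Q * trans_ent (Some s) u"
  proof (cases "u \<in> Av s")
    case True then show ?thesis using QTQ trans_ent_nonneg[OF s True] by (intro mult_right_mono)
  next
    case False
    then have "QT = 0" unfolding QT_def by (simp add: act_outside_Av[OF v s False])
    moreover have "Q = 0" unfolding Qeq by (simp add: act_outside_Av[OF v s False])
    ultimately show ?thesis by simp
  qed
  show ?thesis using a b by (simp add: QT_def Q_def N_def)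
qed

lemma step_ent_partial_le: "policy pol \<Longrightarrow> (\<Sum>t<T. step_ent pol t) \<le> occ_ent (occ pol)"
proof -
  assume v: "policy pol"
  have "(\<Sum>t<T. step_ent pol t) = (\<Sum>s\<in>JS. \<Sum>u\<in>UNIV.
      (\<Sum>t<T. \<Sum>h\<in>{h. length h = t}. xlog (hist pol h (Some s) * pol h (Some s) u) (hist pol h (Some s)))
    + (\<Sum>t<T. act pol t s u) * trans_ent (Some s) u)"
  proof -
    have sw: "\<And>f :: nat \<Rightarrow> _ \<Rightarrow> _ \<Rightarrow> real. (\<Sum>t<T. \<Sum>s\<in>JS. \<Sum>u\<in>(UNIV::('i\<Rightarrow>'a) option set). f t s u)
        = (\<Sum>s\<in>JS. \<Sum>u\<in>UNIV. \<Sum>t<T. f t s u)"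
      by (subst sum.swap, rule sum.cong[OF refl], rule sum.swap)
    show ?thesis unfolding step_ent_swap sw by (simp add: sum.distrib sum_distrib_right)
  qed
  also have "\<dots> \<le> occ_ent (occ pol)" unfolding occ_ent_def
    by (intro sum_mono occ_ent_partial_le[OF v]) auto
  finally show ?thesis .
qed

lemma H_X_le_occ_ent: assumes v: "policy pol" shows "H_X S A Tr sI ST SA pol \<le> occ_ent (occ pol)"
proof -
  have part: "(\<Sum>t<n. end_ent pol t) \<le> occ_ent (occ pol)" for n
  proof -
    have "(\<Sum>t<n. end_ent pol t) \<le> (\<Sum>t<Suc n. end_ent pol t)" by (simp add: end_ent_nonneg[OF v])
    also have "\<dots> \<le> (\<Sum>t<Suc n. end_ent pol t) + state_ent pol n" using state_ent_nonneg[OF v] by simp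
    also have "\<dots> = (\<Sum>t<n. step_ent pol t)" by (rule ent_telescope[OF v])
    also have "\<dots> \<le> occ_ent (occ pol)" by (rule step_ent_partial_le[OF v])
    finally show ?thesis .
  qed
  have sm: "summable (end_ent pol)" by (rule summableI_nonneg_bounded[OF end_ent_nonneg[OF v] part])
  have "H_X S A Tr sI ST SA pol = (\<Sum>t. end_ent pol t)"
    unfolding H_X_eq_end_ent using suminf_ennreal2[OF end_ent_nonneg[OF v] sm] suminf_nonneg[OF sm end_ent_nonneg[OF v]]
    by simp
  also have "\<dots> \<le> occ_ent (occ pol)" by (rule suminf_le_const[OF sm part])
  finally show ?thesis .
qed

definition "live_mass pol T = (\<Sum>s\<in>JS. visit pol T s)"

lemma live_mass_nonneg: "policy pol \<Longrightarrow> 0 \<le> live_mass pol T"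
  unfolding live_mass_def by (intro sum_nonneg visit_nonneg)

lemma live_mass_summable: "policy pol \<Longrightarrow> summable (live_mass pol)"
  unfolding live_mass_def using visits_summable by (intro summable_sum) blast

lemma PK_sum_JS_le_one:
  assumes s: "s \<in> JS" and u: "u \<in> Av s"
  shows "(\<Sum>y\<in>JS. PK (Some s) u (Some y)) \<le> 1"
proof -
  have "(\<Sum>y\<in>JS. PK (Some s) u (Some y)) \<le> (\<Sum>y\<in>UNIV. PK (Some s) u (Some y))"
    by (intro sum_mono2) (auto simp: PK_nonneg)
  also have "\<dots> \<le> PK (Some s) u None + (\<Sum>y\<in>UNIV. PK (Some s) u (Some y))" by (simp add: PK_nonneg)
  also have "\<dots> = 1" using PK_sum_one[OF s u] by (simp add: sum_UNIV_option)
  finally show ?thesis .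
qed

lemma live_mass_decreasing: assumes v: "policy pol" shows "live_mass pol (Suc T) \<le> live_mass pol T"
proof -
  have "live_mass pol (Suc T) = (\<Sum>y\<in>JS. \<Sum>s\<in>JS. \<Sum>u\<in>UNIV. act pol T s u * PK (Some s) u (Some y))"
    unfolding live_mass_def by (simp add: visit_Suc[OF v])
  also have "\<dots> = (\<Sum>s\<in>JS. \<Sum>u\<in>UNIV. act pol T s u * (\<Sum>y\<in>JS. PK (Some s) u (Some y)))"
    by (subst sum.swap) (simp add: sum_distrib_left sum.swap[of _ UNIV])
  also have "\<dots> \<le> (\<Sum>s\<in>JS. \<Sum>u\<in>UNIV. act pol T s u)"
  proof (intro sum_mono)
    fix s u assume s: "s \<in> JS"
    show "act pol T s u * (\<Sum>y\<in>JS. PK (Some s) u (Some y)) \<le> act pol T s u"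
    proof (cases "u \<in> Av s")
      case True then show ?thesis using PK_sum_JS_le_one[OF s True] act_nonneg[OF v] by (simp add: mult_left_le)
    next
      case False then show ?thesis using act_outside_Av[OF v s False] by simp
    qed
  qed
  also have "\<dots> = live_mass pol T" unfolding live_mass_def by (simp add: act_sum[OF v])
  finally show ?thesis .
qed

lemma state_ent_le:
  assumes v: "policy pol"
  shows "state_ent pol T \<le> xlog (live_mass pol T) (real (CARD(('i \<Rightarrow> 's) option \<times> ('i \<Rightarrow> 'a) option) ^ T * card JS))"
proof -
  let ?H = "{h :: ((('i \<Rightarrow> 's) option \<times> ('i \<Rightarrow> 'a) option) list). length h = T}"
  have "state_ent pol T = (\<Sum>p\<in>?H \<times> JS. xlog (hist pol (fst p) (Some (snd p))) 1)"
    unfolding state_ent_def by (simp add: sum.cartesian_product split_def)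
  also have "\<dots> \<le> xlog (\<Sum>p\<in>?H \<times> JS. hist pol (fst p) (Some (snd p))) (\<Sum>p\<in>?H \<times> JS. 1)"
    by (rule xlog_sum_le) (auto simp: finite_lists_length hist_nonneg[OF v])
  also have "(\<Sum>p\<in>?H \<times> JS. hist pol (fst p) (Some (snd p))) = live_mass pol T"
  proof -
    have "(\<Sum>s\<in>JS. \<Sum>h\<in>?H. hist pol h (Some s)) = (\<Sum>h\<in>?H. \<Sum>s\<in>JS. hist pol h (Some s))"
      by (rule sum.swap)
    then show ?thesis unfolding live_mass_def visit_prob_def by (simp add: sum.cartesian_product split_def)
  qed
  also have "(\<Sum>p\<in>?H \<times> JS. 1) = real (CARD(('i \<Rightarrow> 's) option \<times> ('i \<Rightarrow> 'a) option) ^ T * card JS)"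
    by (simp add: card_cartesian_product card_lists_length)
  finally show ?thesis .
qed

text \<open>By the log-sum inequality the entropy of the current state after T steps is about
  T m(T) log c at most, where m is the live mass and c the number of state-action pairs;
  m is decreasing and summable, hence T m(T) \<longrightarrow> 0.\<close>

lemma state_ent_LIMSEQ_0: assumes v: "policy pol" shows "state_ent pol \<longlonglongrightarrow> 0"
proof -
  define cc where "cc = CARD(('i \<Rightarrow> 's) option \<times> ('i \<Rightarrow> 'a) option)"
  have cc1: "1 \<le> cc" by (simp add: Suc_le_eq cc_def)
  have k1: "1 \<le> card JS" by (rule card_JS_ge_1)
  define k where "k = real (card JS)"
  have kpos: "0 < k" using k1 by (simp add: k_def)
  have bnd: "state_ent pol T \<le> real T * live_mass pol T * ln (real cc) + live_mass pol T * ln k + 2 * sqrt (live_mass pol T)" for T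
  proof -
    have pos: "0 < real (cc ^ T * card JS)" using cc1 k1 by simp
    have "state_ent pol T \<le> xlog (live_mass pol T) (real (cc ^ T * card JS))" using state_ent_le[OF v] by (simp add: cc_def)
    also have "xlog (live_mass pol T) (real (cc ^ T * card JS)) = live_mass pol T * ln (real (cc ^ T * card JS)) + xlog (live_mass pol T) 1"
      by (rule xlog_eq_ln_add[OF live_mass_nonneg[OF v] pos])
    also have "ln (real (cc ^ T * card JS)) = real T * ln (real cc) + ln k"
    proof -
      have "JS \<noteq> {}" using sI_in_JS by auto
      then show ?thesis using cc1 k1 by (simp add: k_def ln_mult ln_realpow)
    qed
    also have "xlog (live_mass pol T) 1 \<le> 2 * sqrt (live_mass pol T)" by (rule xlog_one_le_sqrt[OF live_mass_nonneg[OF v]])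
    finally show ?thesis by (simp add: algebra_simps)
  qed
  have l1: "(\<lambda>T. real T * live_mass pol T) \<longlonglongrightarrow> 0"
    by (rule decseq_summable_mult_LIMSEQ_0[OF live_mass_nonneg[OF v] live_mass_decreasing[OF v] live_mass_summable[OF v]])
  have l2: "live_mass pol \<longlonglongrightarrow> 0" by (rule summable_LIMSEQ_zero[OF live_mass_summable[OF v]])
  have l3: "(\<lambda>T. sqrt (live_mass pol T)) \<longlonglongrightarrow> 0" using tendsto_real_sqrt[OF l2] by simp
  have lim: "(\<lambda>T. real T * live_mass pol T * ln (real cc) + live_mass pol T * ln k + 2 * sqrt (live_mass pol T)) \<longlonglongrightarrow> 0"
    using tendsto_add[OF tendsto_add[OF tendsto_mult_right[OF l1, of "ln (real cc)"] tendsto_mult_right[OF l2, of "ln k"]]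
        tendsto_mult_left[OF l3, of 2]] by simp
  show ?thesis
    by (rule tendsto_sandwich[OF _ _ tendsto_const lim]) (auto simp: state_ent_nonneg[OF v] bnd)
qed

definition "stat_weight \<sigma> s u = xlog (\<sigma> (Some s) u) 1 + \<sigma> (Some s) u * trans_ent (Some s) u"

lemma act_stationary: "act (\<lambda>h. \<sigma>) t s u = visit (\<lambda>h. \<sigma>) t s * \<sigma> (Some s) u"
  unfolding act_prob_def visit_prob_def by (simp add: sum_distrib_right)

lemma step_ent_stationary:
  assumes v: "policy (\<lambda>h. \<sigma>)"
  shows "step_ent (\<lambda>h. \<sigma>) t = (\<Sum>s\<in>JS. \<Sum>u\<in>UNIV. visit (\<lambda>h. \<sigma>) t s * stat_weight \<sigma> s u)"
proof -
  have "step_ent (\<lambda>h. \<sigma>) t = (\<Sum>h\<in>{h. length h = t}. \<Sum>s\<in>JS. \<Sum>u\<in>UNIV. hist (\<lambda>h. \<sigma>) h (Some s) * stat_weight \<sigma> s u)"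
    unfolding step_ent_def
  proof (intro sum.cong refl)
    fix h s u
    have "0 \<le> hist (\<lambda>h. \<sigma>) h (Some s)" "0 \<le> \<sigma> (Some s) u"
      using hist_nonneg[OF v] policy_nonneg[OF v] by auto
    then show "xlog (hist (\<lambda>h. \<sigma>) h (Some s) * \<sigma> (Some s) u) (hist (\<lambda>h. \<sigma>) h (Some s)) +
          hist (\<lambda>h. \<sigma>) h (Some s) * \<sigma> (Some s) u * trans_ent (Some s) u =
          hist (\<lambda>h. \<sigma>) h (Some s) * stat_weight \<sigma> s u"
      unfolding stat_weight_def xlog_scale[OF \<open>0 \<le> hist (\<lambda>h. \<sigma>) h (Some s)\<close> \<open>0 \<le> \<sigma> (Some s) u\<close>]
      by (simp add: algebra_simps)
  qed
  also have "\<dots> = (\<Sum>s\<in>JS. \<Sum>u\<in>UNIV. \<Sum>h\<in>{h. length h = t}. hist (\<lambda>h. \<sigma>) h (Some s) * stat_weight \<sigma> s u)"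
    by (subst sum.swap, rule sum.cong[OF refl], rule sum.swap)
  also have "\<dots> = (\<Sum>s\<in>JS. \<Sum>u\<in>UNIV. visit (\<lambda>h. \<sigma>) t s * stat_weight \<sigma> s u)"
    by (simp add: visit_prob_def sum_distrib_right)
  finally show ?thesis .
qed

definition "visits pol s = (\<Sum>t. visit pol t s)"

lemma occ_stationary:
  assumes v: "policy (\<lambda>h. \<sigma>)"
  shows "occ (\<lambda>h. \<sigma>) s u = visits (\<lambda>h. \<sigma>) s * \<sigma> (Some s) u"
proof -
  have sm: "summable (\<lambda>t. visit (\<lambda>h. \<sigma>) t s)" using visits_summable[OF v] by blast
  show ?thesis unfolding occ_eq_suminf[OF v] act_stationary visits_def by (rule suminf_mult2[OF sm, symmetric])
qed

lemma visits_nonneg: "policy pol \<Longrightarrow> 0 \<le> visits pol s"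
  unfolding visits_def using visits_summable visit_nonneg by (metis suminf_nonneg)

lemma occ_ent_stationary:
  assumes v: "policy (\<lambda>h. \<sigma>)"
  shows "occ_ent (occ (\<lambda>h. \<sigma>)) = (\<Sum>s\<in>JS. \<Sum>u\<in>UNIV. visits (\<lambda>h. \<sigma>) s * stat_weight \<sigma> s u)"
  unfolding occ_ent_def
proof (intro sum.cong refl)
  fix s u assume s: "s \<in> JS"
  have N: "(\<Sum>u'\<in>UNIV. occ (\<lambda>h. \<sigma>) s u') = visits (\<lambda>h. \<sigma>) s"
    using occ_sum_eq_suminf_visit[OF v s] by (simp add: visits_def)
  have p: "0 \<le> visits (\<lambda>h. \<sigma>) s" "0 \<le> \<sigma> (Some s) u"
    using visits_nonneg[OF v] policy_nonneg[OF v] by auto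
  show "xlog (occ (\<lambda>h. \<sigma>) s u) (\<Sum>u'\<in>UNIV. occ (\<lambda>h. \<sigma>) s u') + occ (\<lambda>h. \<sigma>) s u * trans_ent (Some s) u =
      visits (\<lambda>h. \<sigma>) s * stat_weight \<sigma> s u"
  proof -
    have e1: "xlog (occ (\<lambda>h. \<sigma>) s u) (\<Sum>u'\<in>UNIV. occ (\<lambda>h. \<sigma>) s u') = visits (\<lambda>h. \<sigma>) s * xlog (\<sigma> (Some s) u) 1"
      unfolding N unfolding occ_stationary[OF v] by (rule xlog_scale[OF p])
    show ?thesis by (subst e1) (simp add: occ_stationary[OF v] stat_weight_def algebra_simps)
  qed
qed

lemma step_ent_stationary_sums:
  assumes v: "policy (\<lambda>h. \<sigma>)"
  shows "(step_ent (\<lambda>h. \<sigma>)) sums occ_ent (occ (\<lambda>h. \<sigma>))"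
proof -
  have "(\<lambda>t. \<Sum>s\<in>JS. \<Sum>u\<in>UNIV. visit (\<lambda>h. \<sigma>) t s * stat_weight \<sigma> s u) sums (\<Sum>s\<in>JS. \<Sum>u\<in>UNIV. visits (\<lambda>h. \<sigma>) s * stat_weight \<sigma> s u)"
  proof (intro sums_sum)
    fix s u
    have "(\<lambda>t. visit (\<lambda>h. \<sigma>) t s) sums visits (\<lambda>h. \<sigma>) s"
      unfolding visits_def using visits_summable[OF v] by (blast intro: summable_sums)
    then show "(\<lambda>t. visit (\<lambda>h. \<sigma>) t s * stat_weight \<sigma> s u) sums (visits (\<lambda>h. \<sigma>) s * stat_weight \<sigma> s u)"
      by (rule sums_mult2)
  qed
  moreover have "step_ent (\<lambda>h. \<sigma>) = (\<lambda>t. \<Sum>s\<in>JS. \<Sum>u\<in>UNIV. visit (\<lambda>h. \<sigma>) t s * stat_weight \<sigma> s u)"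
    using step_ent_stationary[OF v] by (simp add: fun_eq_iff)
  ultimately show ?thesis using occ_ent_stationary[OF v] by simp
qed

lemma H_X_stationary:
  assumes v: "policy (\<lambda>h. \<sigma>)"
  shows "H_X S A Tr sI ST SA (\<lambda>h. \<sigma>) = occ_ent (occ (\<lambda>h. \<sigma>))"
proof -
  let ?pol = "\<lambda>h. \<sigma>"
  have L: "(\<lambda>T. \<Sum>t<T. step_ent ?pol t) \<longlonglongrightarrow> occ_ent (occ ?pol)"
    using step_ent_stationary_sums[OF v] by (simp add: sums_def)
  have "(\<lambda>T. (\<Sum>t<T. step_ent ?pol t) - state_ent ?pol T) \<longlonglongrightarrow> occ_ent (occ ?pol) - 0"
    by (rule tendsto_diff[OF L state_ent_LIMSEQ_0[OF v]])
  moreover have "(\<lambda>T. (\<Sum>t<T. step_ent ?pol t) - state_ent ?pol T) = (\<lambda>T. \<Sum>t<Suc T. end_ent ?pol t)"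
    using ent_telescope[OF v] by (auto simp: algebra_simps fun_eq_iff)
  ultimately have "(\<lambda>T. \<Sum>t<Suc T. end_ent ?pol t) \<longlonglongrightarrow> occ_ent (occ ?pol)" by simp
  then have "(\<lambda>T. \<Sum>t<T. end_ent ?pol t) \<longlonglongrightarrow> occ_ent (occ ?pol)" by (rule LIMSEQ_imp_Suc)
  then have sums: "end_ent ?pol sums occ_ent (occ ?pol)" by (simp add: sums_def)
  have visit: "0 \<le> occ_ent (occ ?pol)"
    using sums_unique[OF sums] suminf_nonneg[OF sums_summable[OF sums] end_ent_nonneg[OF v]] by simp
  show ?thesis unfolding H_X_eq_end_ent
    using suminf_ennreal_eq[OF end_ent_nonneg[OF v] sums] visit by simp
qed

definition "uniform s u = (if u \<in> Av s then 1 / real (card (Av s)) else 0)"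

lemma uniform_nonneg: "0 \<le> uniform s u" by (simp add: uniform_def)

lemma uniform_pos: "u \<in> Av s \<Longrightarrow> 0 < uniform s u"
  using finite_Av Av_nonempty by (simp add: uniform_def card_gt_0_iff)

lemma uniform_sum: "(\<Sum>u\<in>Av s. uniform s u) = 1"
  using finite_Av Av_nonempty by (simp add: uniform_def)

definition "uniform_policy x u = (case x of None \<Rightarrow> 0 | Some s \<Rightarrow> if s \<in> JS then uniform s u else 0)"

lemma uniform_policy_valid: "policy (\<lambda>h. uniform_policy)"
  unfolding pp_policy_def using uniform_sum uniform_nonneg
  by (auto simp: uniform_policy_def uniform_def split: option.splits)

definition "state_kernel \<sigma> s y = (\<Sum>u\<in>UNIV. \<sigma> (Some s) u * PK (Some s) u (Some y))"

lemma state_kernel_nonneg: "policy (\<lambda>h. \<sigma>) \<Longrightarrow> 0 \<le> state_kernel \<sigma> s y"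
  using policy_nonneg[of "\<lambda>h. \<sigma>"] PK_nonneg
  by (auto simp: state_kernel_def intro!: sum_nonneg mult_nonneg_nonneg)

lemma visit_stationary_Suc:
  assumes v: "policy (\<lambda>h. \<sigma>)"
  shows "visit (\<lambda>h. \<sigma>) (Suc t) y = (\<Sum>s\<in>JS. visit (\<lambda>h. \<sigma>) t s * state_kernel \<sigma> s y)"
  unfolding visit_Suc[OF v] act_stationary state_kernel_def by (simp add: sum_distrib_left mult.assoc)

lemma PK_sum_JS_one:
  assumes s: "s \<in> JS" "s \<notin> Stop" and u: "u \<in> Av s"
  shows "(\<Sum>y\<in>JS. PK (Some s) u (Some y)) = 1"
proof -
  have "(\<Sum>y\<in>JS. PK (Some s) u (Some y)) = (\<Sum>y\<in>UNIV. PK (Some s) u (Some y))"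
  proof (rule sum.mono_neutral_left)
    show "\<forall>i\<in>UNIV - JS. PK (Some s) u (Some i) = 0"
      using PK_Some_nonzero jkernel_nonzero by blast
  qed auto
  also have "\<dots> = PK (Some s) u None + (\<Sum>y\<in>UNIV. PK (Some s) u (Some y))"
    using PK_None_nonzero s(2) by auto
  also have "\<dots> = 1" using PK_sum_one[OF s(1) u] by (simp add: sum_UNIV_option)
  finally show ?thesis .
qed

lemma state_kernel_sum:
  assumes v: "policy (\<lambda>h. \<sigma>)" and s: "s \<in> JS"
  shows "(\<Sum>y\<in>JS. state_kernel \<sigma> s y) = (if s \<in> Stop then 0 else 1)"
proof (cases "s \<in> Stop")
  case True
  then have "\<And>u y. PK (Some s) u (Some y) = 0" using PK_Some_nonzero by blast
  then show ?thesis using True by (simp add: state_kernel_def)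
next
  case False
  have "(\<Sum>y\<in>JS. state_kernel \<sigma> s y) = (\<Sum>u\<in>UNIV. \<sigma> (Some s) u * (\<Sum>y\<in>JS. PK (Some s) u (Some y)))"
    unfolding state_kernel_def by (simp add: sum_distrib_left) (rule sum.swap)
  also have "\<dots> = (\<Sum>u\<in>UNIV. \<sigma> (Some s) u)"
  proof (rule sum.cong[OF refl])
    fix u show "\<sigma> (Some s) u * (\<Sum>y\<in>JS. PK (Some s) u (Some y)) = \<sigma> (Some s) u"
      using PK_sum_JS_one[OF s False] policy_outside_Av[OF v s, of u] by (cases "u \<in> Av s") auto
  qed
  also have "\<dots> = 1" using policy_sum_one[OF v s] by simp
  finally show ?thesis using False by simp
qed

lemma visits_flow:
  assumes v: "policy (\<lambda>h. \<sigma>)" and y: "y \<in> JS"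
  shows "visits (\<lambda>h. \<sigma>) y = (if y = sI then 1 else 0) + (\<Sum>s\<in>JS. visits (\<lambda>h. \<sigma>) s * state_kernel \<sigma> s y)"
proof -
  have sm: "summable (\<lambda>t. visit (\<lambda>h. \<sigma>) t s)" for s using visits_summable[OF v] by blast
  have "visits (\<lambda>h. \<sigma>) y = visit (\<lambda>h. \<sigma>) 0 y + (\<Sum>t. visit (\<lambda>h. \<sigma>) (Suc t) y)"
    unfolding visits_def using suminf_split_head[OF sm] by simp
  also have "(\<Sum>t. visit (\<lambda>h. \<sigma>) (Suc t) y) = (\<Sum>s\<in>JS. visits (\<lambda>h. \<sigma>) s * state_kernel \<sigma> s y)"
    unfolding visit_stationary_Suc[OF v] visits_def
    by (subst suminf_sum) (auto intro!: summable_mult2 sm simp: suminf_mult2[OF sm])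
  finally show ?thesis by (simp add: visit_prob_0)
qed

lemma reachable_visited:
  assumes v: "policy (\<lambda>h. \<tau>)"
    and pos: "\<And>s u. s \<in> JS - C \<Longrightarrow> u \<in> Av s \<Longrightarrow> 0 < \<tau> (Some s) u"
    and y: "y \<in> Reach"
  shows "(\<exists>t. 0 < visit (\<lambda>h. \<tau>) t y) \<or> (\<exists>t. \<exists>c\<in>C. 0 < visit (\<lambda>h. \<tau>) t c)"
  using y
proof (induction rule: Reach.induct)
  case Reach_init
  have "visit (\<lambda>h. \<tau>) 0 sI = 1" by (simp add: visit_prob_0)
  then show ?case by (metis zero_less_one)
next
  case (Reach_step s a y)
  show ?case
  proof (cases "\<exists>t. \<exists>c\<in>C. 0 < visit (\<lambda>h. \<tau>) t c")
    case False
    then obtain t where t: "0 < visit (\<lambda>h. \<tau>) t s" and sC: "s \<notin> C" using Reach_step.IH by blast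
    have sJ: "s \<in> JS" by (rule Reach_JS[OF Reach_step.hyps(1)])
    have "0 < \<tau> (Some s) (Some a) * PK (Some s) (Some a) (Some y)"
      using pos[of s "Some a"] sJ sC Reach_step.hyps(2-4) jkernel_nonneg[of s a y]
      by (simp add: avail_def pkernel_def)
    also have "\<dots> \<le> state_kernel \<tau> s y"
      unfolding state_kernel_def using policy_nonneg[OF v] PK_nonneg
      by (intro member_le_sum) (auto intro!: mult_nonneg_nonneg)
    finally have "0 < visit (\<lambda>h. \<tau>) t s * state_kernel \<tau> s y" using t by simp
    also have "\<dots> \<le> visit (\<lambda>h. \<tau>) (Suc t) y"
      unfolding visit_stationary_Suc[OF v] using sJ visit_nonneg[OF v] state_kernel_nonneg[OF v]
      by (intro member_le_sum) (auto intro!: mult_nonneg_nonneg)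
    finally show ?thesis by blast
  qed blast
qed

lemma closed_class_mass_mono:
  assumes v: "policy (\<lambda>h. \<tau>)" and C: "C \<subseteq> JS - Stop"
    and closed: "\<And>s y. s \<in> C \<Longrightarrow> y \<in> JS \<Longrightarrow> 0 < state_kernel \<tau> s y \<Longrightarrow> y \<in> C"
  shows "(\<Sum>c\<in>C. visit (\<lambda>h. \<tau>) t c) \<le> (\<Sum>c\<in>C. visit (\<lambda>h. \<tau>) (Suc t) c)"
proof -
  let ?n = "visit (\<lambda>h. \<tau>) t"
  have kernel_C: "(\<Sum>y\<in>C. state_kernel \<tau> c y) = 1" if c: "c \<in> C" for c
  proof -
    from c C have cJ: "c \<in> JS" "c \<notin> Stop" by auto
    have "(\<Sum>y\<in>C. state_kernel \<tau> c y) = (\<Sum>y\<in>JS. state_kernel \<tau> c y)"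
      using C closed[OF c] state_kernel_nonneg[OF v, of c]
      by (intro sum.mono_neutral_left) (auto simp: order_less_le)
    also have "\<dots> = 1" using state_kernel_sum[OF v cJ(1)] cJ(2) by simp
    finally show ?thesis .
  qed
  have "(\<Sum>c\<in>C. ?n c) = (\<Sum>c\<in>C. \<Sum>y\<in>C. ?n c * state_kernel \<tau> c y)"
    by (simp add: kernel_C sum_distrib_left[symmetric])
  also have "\<dots> = (\<Sum>y\<in>C. \<Sum>c\<in>C. ?n c * state_kernel \<tau> c y)" by (rule sum.swap)
  also have "\<dots> \<le> (\<Sum>y\<in>C. \<Sum>c\<in>JS. ?n c * state_kernel \<tau> c y)"
    using C visit_nonneg[OF v] state_kernel_nonneg[OF v]
    by (intro sum_mono sum_mono2) (auto intro!: mult_nonneg_nonneg)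
  also have "\<dots> = (\<Sum>y\<in>C. visit (\<lambda>h. \<tau>) (Suc t) y)" by (simp add: visit_stationary_Suc[OF v])
  finally show ?thesis .
qed

text \<open>Modify \<sigma> outside C to play every available action: the reachable class C is then
  entered with positive probability, and being closed it keeps its mass forever, which
  contradicts the summability of the visits.\<close>

lemma no_closed_nonstop_class:
  assumes v: "policy (\<lambda>h. \<sigma>)"
    and C: "C \<subseteq> JS - Stop" "C \<noteq> {}" "C \<subseteq> Reach"
    and closed: "\<And>s y. s \<in> C \<Longrightarrow> y \<in> JS \<Longrightarrow> 0 < state_kernel \<sigma> s y \<Longrightarrow> y \<in> C"
  shows False
proof -
  define \<tau> where "\<tau> x = (case x of Some s \<Rightarrow> if s \<in> C then \<sigma> x else uniform_policy x | None \<Rightarrow> (\<lambda>u. 0))" for x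
  have v\<tau>: "policy (\<lambda>h. \<tau>)"
    using v uniform_policy_valid unfolding pp_policy_def \<tau>_def by (auto split: option.splits)
  have kernel_\<tau>: "state_kernel \<tau> s = state_kernel \<sigma> s" if "s \<in> C" for s
    using that by (simp add: state_kernel_def \<tau>_def fun_eq_iff)
  have pos: "0 < \<tau> (Some s) u" if "s \<in> JS - C" "u \<in> Av s" for s u
    using that uniform_pos by (simp add: \<tau>_def uniform_policy_def)
  obtain c0 where "c0 \<in> C" using C(2) by blast
  then obtain t0 c where c: "c \<in> C" and t0: "0 < visit (\<lambda>h. \<tau>) t0 c"
    using reachable_visited[OF v\<tau> pos] C(3) by blast
  define r where "r t = (\<Sum>c\<in>C. visit (\<lambda>h. \<tau>) t c)" for t
  have "incseq r"
    unfolding incseq_Suc_iff r_def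
    using closed_class_mass_mono[OF v\<tau> C(1)] closed kernel_\<tau> by simp
  have "r \<longlonglongrightarrow> 0"
    unfolding r_def using visits_summable[OF v\<tau>] by (intro summable_LIMSEQ_zero summable_sum) blast
  then have "r t0 \<le> 0"
    by (rule LIMSEQ_le_const) (use incseqD[OF \<open>incseq r\<close>] in blast)
  moreover have "0 < r t0"
    unfolding r_def using c t0 visit_nonneg[OF v\<tau>] by (intro sum_pos2) auto
  ultimately show False by simp
qed

definition "state_occ \<xi> s = (\<Sum>u\<in>UNIV. \<xi> s u)"

text \<open>The stationary policy induced by a flow; states the flow never visits get the
  uniform distribution, so the policy is valid everywhere.\<close>

definition "occ_policy \<xi> x u = (case x of None \<Rightarrow> 0 | Some s \<Rightarrow>
   if s \<in> JS then (if state_occ \<xi> s > 0 then \<xi> s u / state_occ \<xi> s else uniform s u) else 0)"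

lemma FlowsD:
  assumes "\<xi> \<in> Flows"
  shows "\<And>s u. 0 \<le> \<xi> s u" "\<And>s u. \<xi> s u \<noteq> 0 \<Longrightarrow> s \<in> Reach" "\<And>s u. \<xi> s u \<noteq> 0 \<Longrightarrow> u \<in> Av s"
    "\<And>s u. \<xi> s u \<le> occ_bound"
    "\<And>y. y \<in> JS \<Longrightarrow> (\<Sum>u\<in>UNIV. \<xi> y u) = (if y = sI then 1 else 0) + (\<Sum>s\<in>JS. \<Sum>u\<in>UNIV. \<xi> s u * PK (Some s) u (Some y))"
  using assms unfolding Flows_def by blast+

lemma state_occ_nonneg: "\<xi> \<in> Flows \<Longrightarrow> 0 \<le> state_occ \<xi> s"
  unfolding state_occ_def by (intro sum_nonneg) (auto dest: FlowsD(1))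

lemma state_occ_Av: "\<xi> \<in> Flows \<Longrightarrow> state_occ \<xi> s = (\<Sum>u\<in>Av s. \<xi> s u)"
  unfolding state_occ_def by (rule sum.mono_neutral_right) (auto dest: FlowsD(3))

lemma state_occ_pos_Reach:
  assumes occ: "\<xi> \<in> Flows" and pos: "0 < state_occ \<xi> s"
  shows "s \<in> Reach"
proof -
  obtain u where "\<xi> s u \<noteq> 0" using pos unfolding state_occ_def by (metis less_irrefl sum.neutral)
  then show ?thesis by (rule FlowsD(2)[OF occ])
qed

lemma occ_policy_factor:
  assumes occ: "\<xi> \<in> Flows" and s: "s \<in> JS"
  shows "\<xi> s u = state_occ \<xi> s * occ_policy \<xi> (Some s) u"
proof (cases "state_occ \<xi> s > 0")
  case True then show ?thesis using s by (simp add: occ_policy_def)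
next
  case False
  then have "state_occ \<xi> s = 0" using state_occ_nonneg[OF occ, of s] by simp
  then have "\<forall>u\<in>UNIV. \<xi> s u = 0" unfolding state_occ_def
    using sum_nonneg_eq_0_iff[of UNIV "\<xi> s"] FlowsD(1)[OF occ] by simp
  then show ?thesis using \<open>state_occ \<xi> s = 0\<close> by simp
qed

lemma occ_policy_nonneg: "\<xi> \<in> Flows \<Longrightarrow> 0 \<le> occ_policy \<xi> x u"
  using FlowsD(1) state_occ_nonneg uniform_nonneg by (auto simp: occ_policy_def split: option.splits)

lemma occ_policy_valid:
  assumes occ: "\<xi> \<in> Flows"
  shows "policy (\<lambda>h. occ_policy \<xi>)"
proof -
  have "(\<Sum>a\<in>Av s. occ_policy \<xi> (Some s) a) = 1" if s: "s \<in> JS" for s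
  proof (cases "state_occ \<xi> s > 0")
    case True
    then have "(\<Sum>a\<in>Av s. occ_policy \<xi> (Some s) a) = (\<Sum>a\<in>Av s. \<xi> s a) / state_occ \<xi> s"
      using s by (simp add: occ_policy_def sum_divide_distrib)
    also have "\<dots> = 1" using True state_occ_Av[OF occ, of s] by simp
    finally show ?thesis .
  next
    case False then show ?thesis using s uniform_sum by (simp add: occ_policy_def)
  qed
  moreover have "occ_policy \<xi> (Some s) a = 0" if s: "s \<in> JS" and a: "a \<notin> Av s" for s a
    using s a FlowsD(3)[OF occ, of s a] by (auto simp: occ_policy_def uniform_def)
  ultimately show ?thesis unfolding pp_policy_def using occ_policy_nonneg[OF occ] by simp
qed

lemma state_occ_flow:
  assumes occ: "\<xi> \<in> Flows" and y: "y \<in> JS"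
  shows "state_occ \<xi> y = (if y = sI then 1 else 0) + (\<Sum>s\<in>JS. state_occ \<xi> s * state_kernel (occ_policy \<xi>) s y)"
proof -
  have "state_occ \<xi> y = (if y = sI then 1 else 0) + (\<Sum>s\<in>JS. \<Sum>u\<in>UNIV. \<xi> s u * PK (Some s) u (Some y))"
    unfolding state_occ_def by (rule FlowsD(5)[OF occ y])
  also have "(\<Sum>s\<in>JS. \<Sum>u\<in>UNIV. \<xi> s u * PK (Some s) u (Some y))
      = (\<Sum>s\<in>JS. state_occ \<xi> s * state_kernel (occ_policy \<xi>) s y)"
    unfolding state_kernel_def sum_distrib_left
    by (intro sum.cong refl) (simp add: occ_policy_factor[OF occ] mult.assoc)
  finally show ?thesis .
qed

lemma visits_le_state_occ:
  assumes occ: "\<xi> \<in> Flows" and y: "y \<in> JS"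
  shows "visits (\<lambda>h. occ_policy \<xi>) y \<le> state_occ \<xi> y"
proof -
  let ?\<sigma> = "occ_policy \<xi>"
  have v: "policy (\<lambda>h. ?\<sigma>)" by (rule occ_policy_valid[OF occ])
  have "(\<Sum>t<T. visit (\<lambda>h. ?\<sigma>) t y) \<le> state_occ \<xi> y" if "y \<in> JS" for T y
    using that
  proof (induction T arbitrary: y)
    case 0 then show ?case using state_occ_nonneg[OF occ] by simp
  next
    case (Suc T)
    have "(\<Sum>t<Suc T. visit (\<lambda>h. ?\<sigma>) t y)
        = visit (\<lambda>h. ?\<sigma>) 0 y + (\<Sum>s\<in>JS. (\<Sum>t<T. visit (\<lambda>h. ?\<sigma>) t s) * state_kernel ?\<sigma> s y)"
      unfolding sum.lessThan_Suc_shift visit_stationary_Suc[OF v]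
      by (simp add: sum_distrib_right) (rule sum.swap)
    also have "\<dots> \<le> visit (\<lambda>h. ?\<sigma>) 0 y + (\<Sum>s\<in>JS. state_occ \<xi> s * state_kernel ?\<sigma> s y)"
      using Suc.IH state_kernel_nonneg[OF v] by (intro add_left_mono sum_mono mult_right_mono) auto
    also have "\<dots> = state_occ \<xi> y"
      using state_occ_flow[OF occ Suc.prems] by (simp add: visit_prob_0)
    finally show ?case .
  qed
  then show ?thesis
    unfolding visits_def using visits_summable[OF v] y by (intro suminf_le_const) blast+
qed

text \<open>The deficit between a flow and the visits of its induced policy is a nonnegative
  source-free flow; it vanishes at stopping states because mass is conserved elsewhere,
  so its support would be a closed class of non-stopping states.\<close>

lemma occ_occ_policy:
  assumes occ: "\<xi> \<in> Flows"
  shows "occ (\<lambda>h. occ_policy \<xi>) = \<xi>"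
proof -
  let ?\<sigma> = "occ_policy \<xi>"
  have v: "policy (\<lambda>h. ?\<sigma>)" by (rule occ_policy_valid[OF occ])
  define D where "D y = state_occ \<xi> y - visits (\<lambda>h. ?\<sigma>) y" for y
  have D_nonneg: "0 \<le> D y" if "y \<in> JS" for y
    using visits_le_state_occ[OF occ that] by (simp add: D_def)
  have D_flow: "D y = (\<Sum>s\<in>JS. D s * state_kernel ?\<sigma> s y)" if "y \<in> JS" for y
    using state_occ_flow[OF occ that] visits_flow[OF v that]
    by (simp add: D_def left_diff_distrib sum_subtractf)
  have D_Stop: "D s = 0" if "s \<in> JS" "s \<in> Stop" for s
    by (rule invariant_measure_vanishes_on_leaks[OF _ D_nonneg D_flow state_kernel_sum[OF v] that]) simp
  have D_zero: "D s = 0" if s: "s \<in> JS" for s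
  proof (rule ccontr)
    assume "D s \<noteq> 0"
    show False
    proof (rule no_closed_nonstop_class[OF v, of "{s\<in>JS. 0 < D s}"])
      show "{s\<in>JS. 0 < D s} \<subseteq> JS - Stop" using D_Stop by auto
      show "{s\<in>JS. 0 < D s} \<noteq> {}" using s \<open>D s \<noteq> 0\<close> D_nonneg[OF s] by auto
      show "{s\<in>JS. 0 < D s} \<subseteq> Reach"
      proof
        fix s' assume "s' \<in> {s\<in>JS. 0 < D s}"
        then have "0 < state_occ \<xi> s'" using visits_nonneg[OF v, of s'] by (simp add: D_def)
        then show "s' \<in> Reach" by (rule state_occ_pos_Reach[OF occ])
      qed
      fix s y assume "s \<in> {s\<in>JS. 0 < D s}" and y: "y \<in> JS" and pos: "0 < state_kernel ?\<sigma> s y"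
      then have "0 < D s * state_kernel ?\<sigma> s y" by simp
      also have "\<dots> \<le> D y"
        unfolding D_flow[OF y] using \<open>s \<in> _\<close> D_nonneg state_kernel_nonneg[OF v]
        by (intro member_le_sum) (auto intro!: mult_nonneg_nonneg)
      finally show "y \<in> {s\<in>JS. 0 < D s}" using y by simp
    qed
  qed
  show ?thesis
  proof (intro ext)
    fix s u
    show "occ (\<lambda>h. ?\<sigma>) s u = \<xi> s u"
    proof (cases "s \<in> JS")
      case True
      then show ?thesis
        using occ_stationary[OF v] occ_policy_factor[OF occ True] D_zero[OF True] by (simp add: D_def)
    next
      case False
      have "\<xi> s u = 0" using FlowsD(2)[OF occ, of s u] Reach_JS False by blast
      moreover have "occ (\<lambda>h. ?\<sigma>) s u = 0" by (simp add: occ_eq_suminf[OF v] act_not_JS[OF v False])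
      ultimately show ?thesis by simp
    qed
  qed
qed

definition "v_occ \<xi> = (\<Sum>s\<in>JS - (ST \<union> Dead). \<Sum>a\<in>jactions A. \<Sum>y\<in>ST. \<xi> s (Some a) * jkernel Tr s a y)"
definition "l_occ \<xi> = (\<Sum>s\<in>JS. \<Sum>a\<in>insert None (Some ` jactions A). \<xi> s a)"
definition "xloc_occ \<xi> i u b = (\<Sum>s\<in>{s\<in>JS. s i = u}.
        (case b of None \<Rightarrow> \<xi> s None | Some c \<Rightarrow> (\<Sum>a\<in>{a\<in>jactions A. a i = c}. \<xi> s (Some a))))"
definition "Hbar_occ \<xi> i =
     (\<Sum>u\<in>S i. \<Sum>b\<in>insert None (Some ` A i).
        xlog (xloc_occ \<xi> i u b) (\<Sum>b'\<in>insert None (Some ` A i). xloc_occ \<xi> i u b'))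
   + (\<Sum>u\<in>S i. \<Sum>b\<in>insert None (Some ` A i). xloc_occ \<xi> i u b *
        (\<Sum>y\<in>insert None (Some ` S i). xlog (lkernel Tr i u b y) 1))"
definition "J_occ \<delta> \<beta> \<xi> = v_occ \<xi> - \<delta> * l_occ \<xi> - \<beta> * ((\<Sum>i\<in>UNIV. Hbar_occ \<xi> i) - occ_ent \<xi>)"

lemma J_obj_eq: "J_obj S A Tr sI ST SA \<delta> \<beta> pol = J_occ \<delta> \<beta> (occ pol) + \<beta> * (H_X S A Tr sI ST SA pol - occ_ent (occ pol))"
proof -
  have "v_full S A Tr sI ST SA pol = v_occ (occ pol)" by (simp add: v_full_def v_occ_def)
  moreover have "l_full S A Tr sI ST SA pol = l_occ (occ pol)" by (simp add: l_full_def l_occ_def)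
  moreover have "Hbar S A Tr sI ST SA pol i = Hbar_occ (occ pol) i" for i
    by (simp add: Hbar_def Hbar_occ_def xloc_def xloc_occ_def)
  ultimately show ?thesis by (simp add: J_obj_def J_occ_def algebra_simps)
qed

lemma J_obj_le: assumes v: "policy pol" and b: "\<beta> > 0"
  shows "J_obj S A Tr sI ST SA \<delta> \<beta> pol \<le> J_occ \<delta> \<beta> (occ pol)"
  using H_X_le_occ_ent[OF v] b unfolding J_obj_eq by (simp add: mult_le_0_iff)

lemma J_obj_stationary: assumes v: "policy (\<lambda>h. \<sigma>)"
  shows "J_obj S A Tr sI ST SA \<delta> \<beta> (\<lambda>h. \<sigma>) = J_occ \<delta> \<beta> (occ (\<lambda>h. \<sigma>))"
  unfolding J_obj_eq H_X_stationary[OF v] by simp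

text \<open>Flows as vectors of a Euclidean space, where compactness is available.\<close>

definition vec_fun :: "real ^ (('i \<Rightarrow> 's) \<times> ('i \<Rightarrow> 'a) option) \<Rightarrow> ('i \<Rightarrow> 's) \<Rightarrow> ('i \<Rightarrow> 'a) option \<Rightarrow> real"
  where "vec_fun v s u = v $ (s, u)"
definition fun_vec :: "(('i \<Rightarrow> 's) \<Rightarrow> ('i \<Rightarrow> 'a) option \<Rightarrow> real) \<Rightarrow> real ^ (('i \<Rightarrow> 's) \<times> ('i \<Rightarrow> 'a) option)"
  where "fun_vec \<xi> = (\<chi> k. \<xi> (fst k) (snd k))"

lemma vec_fun_fun_vec: "vec_fun (fun_vec \<xi>) = \<xi>" by (simp add: vec_fun_def fun_vec_def fun_eq_iff)

definition "Flow_vecs = {v. vec_fun v \<in> Flows}"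

lemma Flow_vecs_eq: "Flow_vecs = {v. (\<forall>s u. 0 \<le> v $ (s,u)) \<and> (\<forall>s u. v $ (s,u) \<noteq> 0 \<longrightarrow> s \<in> Reach \<and> u \<in> Av s) \<and> (\<forall>s u. v $ (s,u) \<le> occ_bound) \<and>
   (\<forall>y. y \<in> JS \<longrightarrow> (\<Sum>u\<in>UNIV. v $ (y,u)) = (if y = sI then 1 else 0) + (\<Sum>s\<in>JS. \<Sum>u\<in>UNIV. v $ (s,u) * PK (Some s) u (Some y)))}"
  by (simp only: Flow_vecs_def Flows_def vec_fun_def[abs_def] Ball_def mem_Collect_eq)

lemma closed_Flow_vecs: "closed Flow_vecs"
  unfolding Flow_vecs_eq
proof (intro closed_Collect_conj closed_Collect_all)
  fix s :: "'i \<Rightarrow> 's" and u :: "('i \<Rightarrow> 'a) option"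
  show "closed {v :: real ^ _. 0 \<le> v $ (s, u)}" by (intro closed_Collect_le continuous_intros)
  show "closed {v :: real ^ _. v $ (s, u) \<le> occ_bound}" by (intro closed_Collect_le continuous_intros)
  show "closed {v :: real ^ _. v $ (s, u) \<noteq> 0 \<longrightarrow> s \<in> Reach \<and> u \<in> Av s}"
  proof (cases "s \<in> Reach \<and> u \<in> Av s")
    case True then show ?thesis by simp
  next
    case False
    then have "{v :: real ^ _. v $ (s, u) \<noteq> 0 \<longrightarrow> s \<in> Reach \<and> u \<in> Av s} = {v. v $ (s,u) = 0}" by auto
    then show ?thesis by (simp add: closed_Collect_eq continuous_intros)
  qed
next
  fix y :: "'i \<Rightarrow> 's"
  show "closed {v :: real ^ _. y \<in> JS \<longrightarrow> (\<Sum>u\<in>UNIV. v $ (y,u)) = (if y = sI then 1 else 0) + (\<Sum>s\<in>JS. \<Sum>u\<in>UNIV. v $ (s,u) * PK (Some s) u (Some y))}"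
  proof (cases "y \<in> JS")
    case False then show ?thesis by simp
  next
    case True
    have "closed {v :: real ^ _. (\<Sum>u\<in>UNIV. v $ (y,u)) = (if y = sI then 1 else 0) + (\<Sum>s\<in>JS. \<Sum>u\<in>UNIV. v $ (s,u) * PK (Some s) u (Some y))}"
      by (intro closed_Collect_eq continuous_intros)
    then show ?thesis using True by simp
  qed
qed

lemma bounded_Flow_vecs: "bounded Flow_vecs"
proof -
  have "norm v \<le> real CARD(('i \<Rightarrow> 's) \<times> ('i \<Rightarrow> 'a) option) * occ_bound" if v: "v \<in> Flow_vecs" for v
  proof -
    have "norm v \<le> (\<Sum>k\<in>UNIV. \<bar>v $ k\<bar>)" by (rule norm_le_l1_cart)
    also have "\<dots> \<le> (\<Sum>k\<in>(UNIV :: (('i \<Rightarrow> 's) \<times> ('i \<Rightarrow> 'a) option) set). occ_bound)"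
    proof (rule sum_mono)
      fix k :: "('i \<Rightarrow> 's) \<times> ('i \<Rightarrow> 'a) option"
      obtain s u where k: "k = (s,u)" by (cases k)
      show "\<bar>v $ k\<bar> \<le> occ_bound" using v unfolding Flow_vecs_eq k by auto
    qed
    also have "\<dots> = real CARD(('i \<Rightarrow> 's) \<times> ('i \<Rightarrow> 'a) option) * occ_bound" by simp
    finally show ?thesis .
  qed
  then show ?thesis unfolding bounded_iff by blast
qed

lemma compact_Flow_vecs: "compact Flow_vecs"
  using closed_Flow_vecs bounded_Flow_vecs by (simp add: compact_eq_bounded_closed)

lemma continuous_on_xloc_occ: "continuous_on Flow_vecs (\<lambda>v. xloc_occ (vec_fun v) i u b)"
  by (cases b) (simp_all add: xloc_occ_def vec_fun_def, (intro continuous_intros)+)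

lemma xloc_occ_nonneg: "\<xi> \<in> Flows \<Longrightarrow> 0 \<le> xloc_occ \<xi> i u b"
  unfolding xloc_occ_def using FlowsD(1)
  by (cases b) (auto intro!: sum_nonneg)

lemma xloc_occ_le: "\<xi> \<in> Flows \<Longrightarrow> b \<in> insert None (Some ` A i) \<Longrightarrow>
    xloc_occ \<xi> i u b \<le> (\<Sum>b'\<in>insert None (Some ` A i). xloc_occ \<xi> i u b')"
  by (rule member_le_sum) (auto simp: xloc_occ_nonneg)

lemma continuous_on_J_occ: "continuous_on Flow_vecs (\<lambda>v. J_occ \<delta> \<beta> (vec_fun v))"
proof -
  have c1: "continuous_on Flow_vecs (\<lambda>v. v_occ (vec_fun v))" unfolding v_occ_def vec_fun_def by (intro continuous_intros)
  have c2: "continuous_on Flow_vecs (\<lambda>v. l_occ (vec_fun v))" unfolding l_occ_def vec_fun_def by (intro continuous_intros)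
  have c3: "continuous_on Flow_vecs (\<lambda>v. Hbar_occ (vec_fun v) i)" for i
    unfolding Hbar_occ_def
  proof (intro continuous_on_add continuous_on_sum continuous_on_mult continuous_on_const continuous_on_xloc_occ)
    fix u b assume b: "b \<in> insert None (Some ` A i)"
    show "continuous_on Flow_vecs (\<lambda>v. xlog (xloc_occ (vec_fun v) i u b) (\<Sum>b'\<in>insert None (Some ` A i). xloc_occ (vec_fun v) i u b'))"
    proof (rule continuous_on_xlog)
      show "continuous_on Flow_vecs (\<lambda>v. xloc_occ (vec_fun v) i u b)" by (rule continuous_on_xloc_occ)
      show "continuous_on Flow_vecs (\<lambda>v. \<Sum>b'\<in>insert None (Some ` A i). xloc_occ (vec_fun v) i u b')"
        by (intro continuous_on_sum continuous_on_xloc_occ)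
      fix v assume "v \<in> Flow_vecs"
      then have "vec_fun v \<in> Flows" by (simp add: Flow_vecs_def)
      then show "0 \<le> xloc_occ (vec_fun v) i u b \<and> xloc_occ (vec_fun v) i u b \<le> (\<Sum>b'\<in>insert None (Some ` A i). xloc_occ (vec_fun v) i u b')"
        using xloc_occ_nonneg xloc_occ_le b by blast
    qed
  qed
  have c4: "continuous_on Flow_vecs (\<lambda>v. occ_ent (vec_fun v))"
    unfolding occ_ent_def
  proof (intro continuous_on_add continuous_on_sum continuous_on_mult continuous_on_const)
    fix s u
    show "continuous_on Flow_vecs (\<lambda>v. vec_fun v s u)" unfolding vec_fun_def by (intro continuous_intros)
    show "continuous_on Flow_vecs (\<lambda>v. xlog (vec_fun v s u) (\<Sum>u'\<in>UNIV. vec_fun v s u'))"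
    proof (rule continuous_on_xlog)
      show "continuous_on Flow_vecs (\<lambda>v. vec_fun v s u)" unfolding vec_fun_def by (intro continuous_intros)
      show "continuous_on Flow_vecs (\<lambda>v. \<Sum>u'\<in>UNIV. vec_fun v s u')" unfolding vec_fun_def by (intro continuous_intros)
      fix v assume "v \<in> Flow_vecs"
      then have occ: "vec_fun v \<in> Flows" by (simp add: Flow_vecs_def)
      show "0 \<le> vec_fun v s u \<and> vec_fun v s u \<le> (\<Sum>u'\<in>UNIV. vec_fun v s u')"
        using FlowsD(1)[OF occ] by (auto intro: member_le_sum)
    qed
  qed
  show ?thesis unfolding J_occ_def
    by (intro continuous_on_diff continuous_on_mult continuous_on_const c1 c2 c3 c4 continuous_on_sum)
qed

lemma stationary_optimal:
  assumes b: "\<beta> > 0"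
  shows "\<exists>\<sigma>. policy (\<lambda>h. \<sigma>) \<and> (\<forall>pol. policy pol \<longrightarrow>
           J_obj S A Tr sI ST SA \<delta> \<beta> pol \<le> J_obj S A Tr sI ST SA \<delta> \<beta> (\<lambda>h. \<sigma>))"
proof -
  have ne: "Flow_vecs \<noteq> {}"
  proof -
    have "fun_vec (occ (\<lambda>h. uniform_policy)) \<in> Flow_vecs"
      unfolding Flow_vecs_def mem_Collect_eq vec_fun_fun_vec by (rule occ_in_Flows[OF uniform_policy_valid])
    then show ?thesis by blast
  qed
  obtain v where v: "v \<in> Flow_vecs" and vmax: "\<And>w. w \<in> Flow_vecs \<Longrightarrow> J_occ \<delta> \<beta> (vec_fun w) \<le> J_occ \<delta> \<beta> (vec_fun v)"
    using continuous_attains_sup[OF compact_Flow_vecs ne continuous_on_J_occ] by blast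
  define \<xi> where "\<xi> = vec_fun v"
  have occ: "\<xi> \<in> Flows" using v by (simp add: Flow_vecs_def \<xi>_def)
  define \<sigma> where "\<sigma> = occ_policy \<xi>"
  have vs: "policy (\<lambda>h. \<sigma>)" unfolding \<sigma>_def by (rule occ_policy_valid[OF occ])
  have Js: "J_obj S A Tr sI ST SA \<delta> \<beta> (\<lambda>h. \<sigma>) = J_occ \<delta> \<beta> \<xi>"
    using J_obj_stationary[OF vs] occ_occ_policy[OF occ] by (simp add: \<sigma>_def)
  show ?thesis
  proof (intro exI conjI allI impI)
    show "policy (\<lambda>h. \<sigma>)" by (rule vs)
    fix pol assume vp: "policy pol"
    have "J_obj S A Tr sI ST SA \<delta> \<beta> pol \<le> J_occ \<delta> \<beta> (occ pol)" by (rule J_obj_le[OF vp b])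
    also have "\<dots> = J_occ \<delta> \<beta> (vec_fun (fun_vec (occ pol)))" by (simp add: vec_fun_fun_vec)
    also have "\<dots> \<le> J_occ \<delta> \<beta> \<xi>" unfolding \<xi>_def
      by (rule vmax) (simp add: Flow_vecs_def vec_fun_fun_vec occ_in_Flows[OF vp])
    finally show "J_obj S A Tr sI ST SA \<delta> \<beta> pol \<le> J_obj S A Tr sI ST SA \<delta> \<beta> (\<lambda>h. \<sigma>)" using Js by simp
  qed
qed

end

theorem proposition1:
  fixes S :: "'i::finite \<Rightarrow> 's::finite set"
    and A :: "'i \<Rightarrow> 'a::finite set"
    and Tr :: "'i \<Rightarrow> 's \<Rightarrow> 'a \<Rightarrow> 's \<Rightarrow> real"
    and sI :: "'i \<Rightarrow> 's"
    and ST SA :: "('i \<Rightarrow> 's) set"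
    and \<delta> \<beta> K :: real
  assumes sI: "\<forall>i. sI i \<in> S i"
    and A_ne: "\<forall>i. A i \<noteq> {}"
    and Tr_nonneg: "\<forall>i u c y. 0 \<le> Tr i u c y"
    and Tr_sum: "\<forall>i. \<forall>u\<in>S i. \<forall>c\<in>A i. (\<Sum>y\<in>S i. Tr i u c y) = 1"
    and Tr_out: "\<forall>i u c y. y \<notin> S i \<longrightarrow> Tr i u c y = 0"
    and ST: "ST \<subseteq> jstates S"
    and SA: "SA \<subseteq> jstates S"
    and delta: "\<delta> > 0"
    and beta: "\<beta> > 0"
    and K: "K \<ge> 0"
    and bound: "\<forall>pol. pp_policy S A ST (dead_set S A Tr ST SA) pol \<longrightarrow>
                  (\<forall>s \<in> jstates S - (ST \<union> dead_set S A Tr ST SA).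
                     (\<Sum>a\<in>Some ` jactions A. pocc S A Tr sI ST SA pol s a) \<le> ennreal K)"
  shows "\<exists>\<sigma>. pp_policy S A ST (dead_set S A Tr ST SA) (\<lambda>h. \<sigma>) \<and>
           (\<forall>pol. pp_policy S A ST (dead_set S A Tr ST SA) pol \<longrightarrow>
              J_obj S A Tr sI ST SA \<delta> \<beta> pol \<le> J_obj S A Tr sI ST SA \<delta> \<beta> (\<lambda>h. \<sigma>))"
proof -
  interpret preprocessed_game S A Tr sI ST SA K
    by (rule preprocessed_game.intro[OF sI A_ne Tr_nonneg Tr_sum Tr_out K bound])
  show ?thesis by (rule stationary_optimal[OF beta])
qed

end
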